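(* Let $G$ be an undirected graph with non-negative edge weights, cellularly embedded on a compact connected orientable surface $\Sigma$ with at least one boundary component, and let $\overline{G}$ be its $\mathbb{Z}_2$-homology cover. Let $\gamma$ be a $\mathbb{Z}_2$-minimal cycle in $G$, and let $\sigma$ be any shortest path in $G$ that intersects $\gamma$. Then there is a $\mathbb{Z}_2$-minimal cycle $\gamma'$ homologous to $\gamma$ which is the projection of a shortest path $(\gamma',h)$ in $\overline{G}$ that starts with a subpath of $(\sigma,0)$ but does not otherwise intersect $(\sigma,0)$.
   Context: Cellular embedding: every face is an open disk. $\beta=2g+b-1$. Fix a tree-coforest decomposition $(T,L,F)$ ($T$ a spanning tree of $G$; $F^*$ a spanning forest of the dual graph $G^*$, whose vertices are faces and boundary cycles, with each component containing exactly one dual boundary vertex; $L=\{e_1,\dots,e_\beta\}$ the rest); adding $e_i^*$ to $F^*$ creates a dual path $\alpha_i$, and the signature $[e]\in\mathbb{Z}_2^\beta$ of edge $e$ has $i$th bit $1$ iff $\alpha_i$ traverses $e^*$ an odd number of times; the signature of a walk is the XOR of the signatures of its edges with multiplicity. The cover $\overline{G}$ has vertices $V\times\mathbb{Z}_2^\beta$ and, for each edge $uv$ and $h$, an edge $(u,h)\to(v,h\oplus[uv])$ with the weight of $uv$; projection $\pi(v,h)=v$. For a path $p$ in $G$ from $u$ to $v$ and $h\in\mathbb{Z}_2^\beta$, $(p,h)$ denotes its unique lift starting at $(u,h)$ (ending at $(v,h\oplus[p])$). A cycle is a closed walk; its length counts edge weights with multiplicity. Two cycles are $\mathbb{Z}_2$-homologous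 if the edge sets each traverses an odd number of times differ by a boundary subgraph (the set of edges with exactly one side in some fixed subset of faces); a cycle is $\mathbb{Z}_2$-minimal if it is a shortest cycle in its homology class. *)

theory Defs
  imports Complex_Main
begin

text \<open>A graph cellularly embedded on a compact connected orientable surface is
represented by a rotation system: a finite set of darts D, a fixed-point-free
involution rv (reversal) and a permutation sc (successor around the tail vertex).
Boundary cycles are a nonempty set Bd of these face orbits (holes); the remaining
orbits are the genuine faces.\<close>

definition orb :: "('a \<Rightarrow> 'a) \<Rightarrow> 'a \<Rightarrow> 'a set" where
  "orb f x = {(f ^^ n) x | n. True}"

definition vert :: "('d \<Rightarrow> 'd) \<Rightarrow> 'd \<Rightarrow> 'd set" where
  "vert sc d = orb sc d"

definition face :: "('d \<Rightarrow> 'd) \<Rightarrow> ('d \<Rightarrow> 'd) \<Rightarrow> 'd \<Rightarrow> 'd set" where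
  "face rv sc d = orb (sc \<circ> rv) d"

definition edge :: "('d \<Rightarrow> 'd) \<Rightarrow> 'd \<Rightarrow> 'd set" where
  "edge rv d = {d, rv d}"

definition sdiff :: "'a set \<Rightarrow> 'a set \<Rightarrow> 'a set" where
  "sdiff A B = (A - B) \<union> (B - A)"

text \<open>A graph given by a dart set X, tail map vx and reversal rv; a walk from u to v
is a list of darts (possibly empty, then u = v).\<close>

definition gwalk :: "'v set \<Rightarrow> 'd set \<Rightarrow> ('d \<Rightarrow> 'v) \<Rightarrow> ('d \<Rightarrow> 'd) \<Rightarrow> 'v \<Rightarrow> 'd list \<Rightarrow> 'v \<Rightarrow> bool" where
  "gwalk Vs X vx rv u ds v \<longleftrightarrow> u \<in> Vs \<and> set ds \<subseteq> X \<and>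
     (if ds = [] then v = u
      else vx (hd ds) = u \<and> vx (rv (last ds)) = v \<and>
           (\<forall>i. Suc i < length ds \<longrightarrow> vx (rv (ds ! i)) = vx (ds ! Suc i)))"

definition gverts :: "('d \<Rightarrow> 'v) \<Rightarrow> ('d \<Rightarrow> 'd) \<Rightarrow> 'v \<Rightarrow> 'd list \<Rightarrow> 'v list" where
  "gverts vx rv u ds = u # map (\<lambda>d. vx (rv d)) ds"

definition gpath :: "'v set \<Rightarrow> 'd set \<Rightarrow> ('d \<Rightarrow> 'v) \<Rightarrow> ('d \<Rightarrow> 'd) \<Rightarrow> 'v \<Rightarrow> 'd list \<Rightarrow> 'v \<Rightarrow> bool" where
  "gpath Vs X vx rv u ds v \<longleftrightarrow> gwalk Vs X vx rv u ds v \<and> distinct (gverts vx rv u ds)"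

definition len :: "('d \<Rightarrow> real) \<Rightarrow> 'd list \<Rightarrow> real" where
  "len w ds = sum_list (map w ds)"

definition gshortest :: "'v set \<Rightarrow> 'd set \<Rightarrow> ('d \<Rightarrow> 'v) \<Rightarrow> ('d \<Rightarrow> 'd) \<Rightarrow> ('d \<Rightarrow> real)
    \<Rightarrow> 'v \<Rightarrow> 'd list \<Rightarrow> 'v \<Rightarrow> bool" where
  "gshortest Vs X vx rv w u ds v \<longleftrightarrow> gpath Vs X vx rv u ds v \<and>
     (\<forall>q. gwalk Vs X vx rv u q v \<longrightarrow> len w ds \<le> len w q)"

definition gacyclic :: "'v set \<Rightarrow> 'd set \<Rightarrow> ('d \<Rightarrow> 'v) \<Rightarrow> ('d \<Rightarrow> 'd) \<Rightarrow> bool" where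
  "gacyclic Vs X vx rv \<longleftrightarrow>
     \<not> (\<exists>u ds. ds \<noteq> [] \<and> gwalk Vs X vx rv u ds u \<and> distinct (map (edge rv) ds))"

definition Verts :: "'d set \<Rightarrow> ('d \<Rightarrow> 'd) \<Rightarrow> 'd set set" where
  "Verts D sc = vert sc ` D"

definition Faces :: "'d set \<Rightarrow> ('d \<Rightarrow> 'd) \<Rightarrow> ('d \<Rightarrow> 'd) \<Rightarrow> 'd set set" where
  "Faces D rv sc = face rv sc ` D"   \<comment> \<open>faces and boundary cycles = dual vertices\<close>

definition Edges :: "'d set \<Rightarrow> ('d \<Rightarrow> 'd) \<Rightarrow> 'd set set" where
  "Edges D rv = edge rv ` D"

definition pwalk :: "'d set \<Rightarrow> ('d \<Rightarrow> 'd) \<Rightarrow> ('d \<Rightarrow> 'd) \<Rightarrow> 'd set \<Rightarrow> 'd list \<Rightarrow> 'd set \<Rightarrow> bool" where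
  "pwalk D rv sc u ds v = gwalk (Verts D sc) D (vert sc) rv u ds v"

text \<open>Cellularly embedded graph with nonnegative edge weights on a compact connected
orientable surface with at least one boundary component; each boundary component is a
simple cycle of the graph, distinct boundary components are vertex-disjoint.\<close>
definition surface_graph :: "'d set \<Rightarrow> ('d \<Rightarrow> 'd) \<Rightarrow> ('d \<Rightarrow> 'd) \<Rightarrow> 'd set set \<Rightarrow> ('d \<Rightarrow> real) \<Rightarrow> bool" where
  "surface_graph D rv sc Bd w \<longleftrightarrow>
     finite D \<and> D \<noteq> {} \<and>
     (\<forall>d\<in>D. rv d \<in> D \<and> rv d \<noteq> d \<and> rv (rv d) = d) \<and>
     bij_betw sc D D \<and>
     (\<forall>u\<in>Verts D sc. \<forall>v\<in>Verts D sc. \<exists>ds. pwalk D rv sc u ds v) \<and>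
     (\<forall>d\<in>D. 0 \<le> w d \<and> w (rv d) = w d) \<and>
     Bd \<subseteq> Faces D rv sc \<and> Bd \<noteq> {} \<and>
     (\<forall>f\<in>Bd. inj_on (vert sc) f \<and> (\<forall>d\<in>f. rv d \<notin> f)) \<and>
     (\<forall>f1\<in>Bd. \<forall>f2\<in>Bd. f1 \<noteq> f2 \<longrightarrow> vert sc ` f1 \<inter> vert sc ` f2 = {})"

definition oddset :: "('d \<Rightarrow> 'd) \<Rightarrow> 'd list \<Rightarrow> 'd set set" where
  "oddset rv ds = {edge rv d | d. d \<in> set ds \<and> odd (length (filter (\<lambda>x. x \<in> edge rv d) ds))}"

definition bdry :: "'d set \<Rightarrow> ('d \<Rightarrow> 'd) \<Rightarrow> ('d \<Rightarrow> 'd) \<Rightarrow> 'd set set \<Rightarrow> 'd set set" where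
  "bdry D rv sc S = {edge rv d | d. d \<in> D \<and> ((face rv sc d \<in> S) \<noteq> (face rv sc (rv d) \<in> S))}"

definition homologous :: "'d set \<Rightarrow> ('d \<Rightarrow> 'd) \<Rightarrow> ('d \<Rightarrow> 'd) \<Rightarrow> 'd set set \<Rightarrow> 'd list \<Rightarrow> 'd list \<Rightarrow> bool" where
  "homologous D rv sc Bd c1 c2 \<longleftrightarrow>
     (\<exists>S. S \<subseteq> Faces D rv sc - Bd \<and> sdiff (oddset rv c1) (oddset rv c2) = bdry D rv sc S)"

definition z2_minimal :: "'d set \<Rightarrow> ('d \<Rightarrow> 'd) \<Rightarrow> ('d \<Rightarrow> 'd) \<Rightarrow> 'd set set \<Rightarrow> ('d \<Rightarrow> real)
    \<Rightarrow> 'd set \<Rightarrow> 'd list \<Rightarrow> bool" where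
  "z2_minimal D rv sc Bd w u c \<longleftrightarrow> pwalk D rv sc u c u \<and>
     (\<forall>v c'. pwalk D rv sc v c' v \<and> homologous D rv sc Bd c' c \<longrightarrow> len w c \<le> len w c')"

text \<open>T spanning tree of G; F a set of edges whose duals form a spanning forest of G*
each component of which contains exactly one boundary vertex; T, F disjoint; es an
enumeration of the remaining edges L; alpha i the dual path created by adding
(es!i)* to F*: a simple dual cycle or a simple dual path between two distinct boundary
vertices, using only darts of F and es!i, and using es!i.\<close>
definition tree_coforest :: "'d set \<Rightarrow> ('d \<Rightarrow> 'd) \<Rightarrow> ('d \<Rightarrow> 'd) \<Rightarrow> 'd set set
    \<Rightarrow> 'd set set \<Rightarrow> 'd set set \<Rightarrow> 'd set list \<Rightarrow> (nat \<Rightarrow> 'd list) \<Rightarrow> bool" where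
  "tree_coforest D rv sc Bd T F es \<alpha> \<longleftrightarrow>
     T \<subseteq> Edges D rv \<and>
     gacyclic (Verts D sc) (\<Union>T) (vert sc) rv \<and>
     (\<forall>u\<in>Verts D sc. \<forall>v\<in>Verts D sc. \<exists>ds. gwalk (Verts D sc) (\<Union>T) (vert sc) rv u ds v) \<and>
     F \<subseteq> Edges D rv \<and>
     gacyclic (Faces D rv sc) (\<Union>F) (face rv sc) rv \<and>
     (\<forall>f\<in>Faces D rv sc. \<exists>!b. b \<in> Bd \<and> (\<exists>ds. gwalk (Faces D rv sc) (\<Union>F) (face rv sc) rv f ds b)) \<and>
     T \<inter> F = {} \<and>
     distinct es \<and> set es = Edges D rv - T - F \<and>
     (\<forall>i < length es.
        set (\<alpha> i) \<subseteq> \<Union>(insert (es ! i) F) \<and>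
        (\<exists>d\<in>set (\<alpha> i). edge rv d = es ! i) \<and>
        distinct (map (edge rv) (\<alpha> i)) \<and>
        ((\<exists>f. \<alpha> i \<noteq> [] \<and> gwalk (Faces D rv sc) (\<Union>(insert (es ! i) F)) (face rv sc) rv f (\<alpha> i) f
               \<and> distinct (map (face rv sc) (\<alpha> i))) \<or>
         (\<exists>b1 b2. b1 \<in> Bd \<and> b2 \<in> Bd \<and> b1 \<noteq> b2 \<and>
               gpath (Faces D rv sc) (\<Union>(insert (es ! i) F)) (face rv sc) rv b1 (\<alpha> i) b2)))"

definition sig :: "('d \<Rightarrow> 'd) \<Rightarrow> 'd set list \<Rightarrow> (nat \<Rightarrow> 'd list) \<Rightarrow> 'd \<Rightarrow> nat set" where
  "sig rv es \<alpha> d = {i. i < length es \<and> odd (length (filter (\<lambda>x. x \<in> edge rv d) (\<alpha> i)))}"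

definition wsig :: "('d \<Rightarrow> 'd) \<Rightarrow> 'd set list \<Rightarrow> (nat \<Rightarrow> 'd list) \<Rightarrow> 'd list \<Rightarrow> nat set" where
  "wsig rv es \<alpha> ds = fold (\<lambda>d h. sdiff h (sig rv es \<alpha> d)) ds {}"

text \<open>Cover darts are pairs (d,h); cover vertices (v,h) with h a subset of {..<beta}
(an element of Z2^beta); the dart (d,h) goes from (tail d, h) to (head d, h xor [d]).\<close>

definition cdarts :: "'d set \<Rightarrow> 'd set list \<Rightarrow> ('d \<times> nat set) set" where
  "cdarts D es = D \<times> Pow {..<length es}"

definition cverts :: "'d set \<Rightarrow> ('d \<Rightarrow> 'd) \<Rightarrow> 'd set list \<Rightarrow> ('d set \<times> nat set) set" where
  "cverts D sc es = Verts D sc \<times> Pow {..<length es}"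

definition cvx :: "('d \<Rightarrow> 'd) \<Rightarrow> 'd \<times> nat set \<Rightarrow> 'd set \<times> nat set" where
  "cvx sc x = (vert sc (fst x), snd x)"

definition crev :: "('d \<Rightarrow> 'd) \<Rightarrow> 'd set list \<Rightarrow> (nat \<Rightarrow> 'd list) \<Rightarrow> 'd \<times> nat set \<Rightarrow> 'd \<times> nat set" where
  "crev rv es \<alpha> x = (rv (fst x), sdiff (snd x) (sig rv es \<alpha> (fst x)))"

definition cw :: "('d \<Rightarrow> real) \<Rightarrow> 'd \<times> nat set \<Rightarrow> real" where
  "cw w x = w (fst x)"

fun lift :: "('d \<Rightarrow> 'd) \<Rightarrow> 'd set list \<Rightarrow> (nat \<Rightarrow> 'd list) \<Rightarrow> nat set \<Rightarrow> 'd list \<Rightarrow> ('d \<times> nat set) list" where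
  "lift rv es \<alpha> h [] = []"
| "lift rv es \<alpha> h (d # ds) = (d, h) # lift rv es \<alpha> (sdiff h (sig rv es \<alpha> d)) ds"

definition cshortest :: "'d set \<Rightarrow> ('d \<Rightarrow> 'd) \<Rightarrow> ('d \<Rightarrow> 'd) \<Rightarrow> 'd set list \<Rightarrow> (nat \<Rightarrow> 'd list)
    \<Rightarrow> ('d \<Rightarrow> real) \<Rightarrow> 'd set \<times> nat set \<Rightarrow> ('d \<times> nat set) list \<Rightarrow> 'd set \<times> nat set \<Rightarrow> bool" where
  "cshortest D rv sc es \<alpha> w x P y =
     gshortest (cverts D sc es) (cdarts D es) (cvx sc) (crev rv es \<alpha>) (cw w) x P y"

end

(*
  Signatures classify Z2-homology classes of closed walks: homologous walks have equal
  signatures because every dual path alpha_i crosses a face boundary evenly; conversely, if two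
  closed walks have equal signatures, their chain difference can be corrected by a face boundary
  so that it vanishes on the dual forest F, it then vanishes on the remaining cotree edges by the
  signatures, and on the spanning tree T because it crosses every vertex cut evenly.

  Consequently a closed walk at v lifts to a walk in the cover from (v,h) to (v,h + [gamma])
  exactly when it is homologous to gamma, and Z2-minimal cycles in the class of gamma are the
  projections of shortest such cover paths. Choose v on both sigma and gamma and h the height of
  the lift (sigma,0) at v. If [gamma] = 0 the empty cycle at v will do. Otherwise the target
  (v,h + [gamma]) is not on the lift of sigma, since sigma is a path; in a shortest cover path P
  to it, replace the part before the last vertex on the lift of sigma by the corresponding
  subpath of that lift (traversed in either direction), which is no longer because sigma is a
  shortest path. Projecting gives the required cycle.
*)

theory Submission
  imports Defs
begin

section \<open>Walks in graphs given by darts\<close>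

definition wf_graph :: "'v set \<Rightarrow> 'd set \<Rightarrow> ('d \<Rightarrow> 'v) \<Rightarrow> ('d \<Rightarrow> 'd) \<Rightarrow> bool" where
  "wf_graph Vs X vx rv \<longleftrightarrow> (\<forall>d\<in>X. vx d \<in> Vs \<and> vx (rv d) \<in> Vs)"

lemma gwalk_Nil [simp]: "gwalk Vs X vx rv u [] v \<longleftrightarrow> u \<in> Vs \<and> v = u"
  by (auto simp: gwalk_def)

lemma gwalk_Cons:
  assumes "wf_graph Vs X vx rv"
  shows "gwalk Vs X vx rv u (d # ds) v \<longleftrightarrow>
     u \<in> Vs \<and> d \<in> X \<and> vx d = u \<and> gwalk Vs X vx rv (vx (rv d)) ds v"
proof (cases ds)
  case Nil
  then show ?thesis using assms by (auto simp: gwalk_def wf_graph_def)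
next
  case (Cons e es)
  have "(\<forall>i. Suc i < length (d # ds) \<longrightarrow> vx (rv ((d # ds) ! i)) = vx ((d # ds) ! Suc i)) \<longleftrightarrow>
      vx (rv d) = vx e \<and> (\<forall>i. Suc i < length ds \<longrightarrow> vx (rv (ds ! i)) = vx (ds ! Suc i))"
    using Cons by (auto simp: less_Suc_eq_0_disj)
  then show ?thesis using Cons assms by (auto simp: gwalk_def wf_graph_def)
qed

lemma gwalk_set: "gwalk Vs X vx rv u ds v \<Longrightarrow> set ds \<subseteq> X"
  by (simp add: gwalk_def)

lemma gwalk_mono: "gwalk Vs X vx rv u ds v \<Longrightarrow> X \<subseteq> Y \<Longrightarrow> gwalk Vs Y vx rv u ds v"
  by (auto simp: gwalk_def)

lemma gverts_Nil [simp]: "gverts vx rv u [] = [u]"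
  by (simp add: gverts_def)

lemma gverts_Cons [simp]: "gverts vx rv u (d # ds) = u # gverts vx rv (vx (rv d)) ds"
  by (simp add: gverts_def)

lemma length_gverts [simp]: "length (gverts vx rv u ds) = Suc (length ds)"
  by (simp add: gverts_def)

lemma gverts_nth_0 [simp]: "gverts vx rv u ds ! 0 = u"
  by (simp add: gverts_def)

lemma start_in_gverts [simp]: "u \<in> set (gverts vx rv u ds)"
  by (simp add: gverts_def)

lemma gverts_append: "gverts vx rv u (xs @ ys) = gverts vx rv u xs @ tl (gverts vx rv m ys)"
  by (simp add: gverts_def)

lemma gverts_snoc: "gverts vx rv u (xs @ [d]) = gverts vx rv u xs @ [vx (rv d)]"
  by (simp add: gverts_def)

lemma gverts_take:
  "k \<le> length ds \<Longrightarrow> gverts vx rv u (take k ds) = take (Suc k) (gverts vx rv u ds)"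
  by (simp add: gverts_def take_map)

lemma gverts_drop:
  "k \<le> length ds \<Longrightarrow> gverts vx rv (gverts vx rv u ds ! k) (drop k ds) = drop k (gverts vx rv u ds)"
proof (induction ds arbitrary: u k)
  case (Cons d ds)
  then show ?case by (cases k) auto
qed simp

context
  fixes Vs :: "'v set" and X :: "'d set" and vx :: "'d \<Rightarrow> 'v" and rv :: "'d \<Rightarrow> 'd"
  assumes wf: "wf_graph Vs X vx rv"
begin

lemma gwalk_append:
  "gwalk Vs X vx rv u (xs @ ys) v \<longleftrightarrow> (\<exists>m. gwalk Vs X vx rv u xs m \<and> gwalk Vs X vx rv m ys v)"
proof (induction xs arbitrary: u)
  case Nil
  then show ?case by (cases ys) (auto simp: gwalk_def)
qed (auto simp: gwalk_Cons[OF wf])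

lemma gwalk_snoc:
  "gwalk Vs X vx rv u ds (vx d) \<Longrightarrow> d \<in> X \<Longrightarrow> gwalk Vs X vx rv u (ds @ [d]) (vx (rv d))"
  using wf by (auto simp: gwalk_append gwalk_Cons wf_graph_def)

lemma gverts_subset: "gwalk Vs X vx rv u ds v \<Longrightarrow> set (gverts vx rv u ds) \<subseteq> Vs"
  by (induction ds arbitrary: u) (auto simp: gwalk_Cons[OF wf])

lemma gwalk_end_in: "gwalk Vs X vx rv u ds v \<Longrightarrow> v \<in> Vs"
  by (induction ds arbitrary: u) (auto simp: gwalk_Cons[OF wf])

lemma gverts_nth_length: "gwalk Vs X vx rv u ds v \<Longrightarrow> gverts vx rv u ds ! length ds = v"
  by (induction ds arbitrary: u) (auto simp: gwalk_Cons[OF wf])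

lemma gwalk_take:
  "gwalk Vs X vx rv u ds v \<Longrightarrow> k \<le> length ds \<Longrightarrow>
    gwalk Vs X vx rv u (take k ds) (gverts vx rv u ds ! k)"
proof (induction ds arbitrary: u k)
  case (Cons d ds)
  then show ?case by (cases k) (auto simp: gwalk_Cons[OF wf])
qed simp

lemma gwalk_drop:
  "gwalk Vs X vx rv u ds v \<Longrightarrow> k \<le> length ds \<Longrightarrow>
    gwalk Vs X vx rv (gverts vx rv u ds ! k) (drop k ds) v"
proof (induction ds arbitrary: u k)
  case (Cons d ds)
  then show ?case by (cases k) (auto simp: gwalk_Cons[OF wf])
qed simp

lemma gwalk_rotate:
  assumes "gwalk Vs X vx rv u ds u" "k \<le> length ds"
  shows "gwalk Vs X vx rv (gverts vx rv u ds ! k) (drop k ds @ take k ds) (gverts vx rv u ds ! k)"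
  using gwalk_take[OF assms] gwalk_drop[OF assms] by (auto simp: gwalk_append)

lemma gverts_edge_ends:
  "gwalk Vs X vx rv u ds v \<Longrightarrow> d \<in> set ds \<Longrightarrow>
    vx d \<in> set (gverts vx rv u ds) \<and> vx (rv d) \<in> set (gverts vx rv u ds)"
  by (induction ds arbitrary: u) (auto simp: gwalk_Cons[OF wf])

lemma gpath_distinct_edges:
  "gwalk Vs X vx rv u ds v \<Longrightarrow> distinct (gverts vx rv u ds) \<Longrightarrow> distinct (map (edge rv) ds)"
proof (induction ds arbitrary: u)
  case (Cons d ds)
  then have d: "vx d = u" "gwalk Vs X vx rv (vx (rv d)) ds v"
    and dis: "u \<notin> set (gverts vx rv (vx (rv d)) ds)" "distinct (gverts vx rv (vx (rv d)) ds)"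
    by (auto simp: gwalk_Cons[OF wf])
  have "edge rv d \<notin> edge rv ` set ds"
  proof
    assume "edge rv d \<in> edge rv ` set ds"
    then obtain b where b: "b \<in> set ds" "d = b \<or> d = rv b"
      by (auto simp: edge_def doubleton_eq_iff)
    then show False using gverts_edge_ends[OF d(2) b(1)] d dis by auto
  qed
  then show ?case using Cons.IH d dis by auto
qed simp

lemma gwalk_splice:
  assumes xs: "gwalk Vs X vx rv u xs m" "distinct (gverts vx rv u xs)" "set (gverts vx rv u xs) \<subseteq> S"
    and ys: "gwalk Vs X vx rv m ys v" "distinct (gverts vx rv m ys)"
      "set (tl (gverts vx rv m ys)) \<inter> S = {}"
  shows "gwalk Vs X vx rv u (xs @ ys) v" and "distinct (gverts vx rv u (xs @ ys))"
    and "\<forall>j. length xs < j \<and> j \<le> length (xs @ ys) \<longrightarrow> gverts vx rv u (xs @ ys) ! j \<notin> S"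
proof -
  have split: "gverts vx rv u (xs @ ys) = gverts vx rv u xs @ tl (gverts vx rv m ys)"
    by (rule gverts_append)
  show "gwalk Vs X vx rv u (xs @ ys) v" using xs(1) ys(1) by (auto simp: gwalk_append)
  show "distinct (gverts vx rv u (xs @ ys))"
    using xs(2,3) ys(2,3) unfolding split by (auto simp: distinct_tl)
  show "\<forall>j. length xs < j \<and> j \<le> length (xs @ ys) \<longrightarrow> gverts vx rv u (xs @ ys) ! j \<notin> S"
  proof (intro allI impI)
    fix j assume j: "length xs < j \<and> j \<le> length (xs @ ys)"
    then have "gverts vx rv u (xs @ ys) ! j = tl (gverts vx rv m ys) ! (j - Suc (length xs))"
      unfolding split by (simp add: nth_append)
    moreover have "j - Suc (length xs) < length (tl (gverts vx rv m ys))" using j by auto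
    then have "tl (gverts vx rv m ys) ! (j - Suc (length xs)) \<in> set (tl (gverts vx rv m ys))"
      by (rule nth_mem)
    ultimately show "gverts vx rv u (xs @ ys) ! j \<notin> S" using ys(3) by auto
  qed
qed

context
  assumes rv_closed: "\<forall>d\<in>X. rv d \<in> X \<and> rv (rv d) = d"
begin

lemma gwalk_rev: "gwalk Vs X vx rv u ds v \<Longrightarrow> gwalk Vs X vx rv v (rev (map rv ds)) u"
proof (induction ds arbitrary: u)
  case (Cons d ds)
  then have d: "d \<in> X" "vx d = u" "gwalk Vs X vx rv (vx (rv d)) ds v"
    by (auto simp: gwalk_Cons[OF wf])
  moreover have "gwalk Vs X vx rv (vx (rv d)) [rv d] u"
    using d wf rv_closed by (auto simp: gwalk_Cons[OF wf] wf_graph_def)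
  ultimately show ?case using Cons.IH by (auto simp: gwalk_append)
qed simp

lemma gverts_rev:
  "gwalk Vs X vx rv u ds v \<Longrightarrow> gverts vx rv v (rev (map rv ds)) = rev (gverts vx rv u ds)"
proof (induction ds arbitrary: u)
  case (Cons d ds)
  then show ?case using rv_closed by (auto simp: gwalk_Cons[OF wf] gverts_snoc)
qed simp

end

end

lemma len_Nil [simp]: "len w [] = 0"
  by (simp add: len_def)

lemma len_Cons [simp]: "len w (d # ds) = w d + len w ds"
  by (simp add: len_def)

lemma len_append: "len w (xs @ ys) = len w xs + len w ys"
  by (simp add: len_def)

lemma len_nonneg: "\<forall>d\<in>set ds. 0 \<le> w d \<Longrightarrow> 0 \<le> len w ds"
  unfolding len_def by (induction ds) auto

lemma len_rev_map:
  assumes "\<forall>d\<in>set ds. w (rv d) = w d"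
  shows "len w (rev (map rv ds)) = len w ds"
  using assms by (induction ds) (auto simp: len_append)

lemma len_rotate: "len w (drop k ds @ take k ds) = len w ds"
  by (metis add.commute append_take_drop_id len_append)

lemma gwalk_to_gpath:
  assumes wf: "wf_graph Vs X vx rv" and "gwalk Vs X vx rv u ds v" and "\<forall>d\<in>set ds. 0 \<le> w d"
  shows "\<exists>p. gpath Vs X vx rv u p v \<and> set p \<subseteq> set ds \<and> len w p \<le> len w ds"
  using assms(2,3)
proof (induction ds arbitrary: u)
  case Nil
  then show ?case by (auto simp: gpath_def)
next
  case (Cons d ds)
  then have d: "d \<in> X" "vx d = u" "gwalk Vs X vx rv (vx (rv d)) ds v" "u \<in> Vs"
    by (auto simp: gwalk_Cons[OF wf])
  obtain p where p: "gpath Vs X vx rv (vx (rv d)) p v" "set p \<subseteq> set ds" "len w p \<le> len w ds"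
    using Cons.IH[OF d(3)] Cons.prems(2) by auto
  show ?case
  proof (cases "u \<in> set (gverts vx rv (vx (rv d)) p)")
    case False
    then have "gpath Vs X vx rv u (d # p) v"
      using p(1) d by (auto simp: gpath_def gwalk_Cons[OF wf])
    then show ?thesis using p by (intro exI[of _ "d # p"]) auto
  next
    case True
    then obtain k where k: "k \<le> length p" "gverts vx rv (vx (rv d)) p ! k = u"
      by (metis in_set_conv_nth length_gverts less_Suc_eq_le)
    have "gpath Vs X vx rv u (drop k p) v"
      using gwalk_drop[OF wf, of _ p v k] gverts_drop[of k p vx rv] p(1) k
      by (auto simp: gpath_def)
    moreover have "0 \<le> len w (take k p)"
      using p(2) Cons.prems(2) by (intro len_nonneg) (auto dest: in_set_takeD)
    then have "len w (drop k p) \<le> len w (d # ds)"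
      using p(3) Cons.prems(2) len_append[of w "take k p" "drop k p"] by simp
    ultimately show ?thesis using p(2) by (auto dest: in_set_dropD)
  qed
qed

lemma gacyclic_no_bypass:
  assumes wf: "wf_graph Vs X vx rv" and rv_closed: "\<forall>d\<in>X. rv d \<in> X \<and> rv (rv d) = d"
    and ac: "gacyclic Vs X vx rv" and d0: "d0 \<in> X"
  shows "\<not> gwalk Vs (X - edge rv d0) vx rv (vx d0) ds (vx (rv d0))"
proof
  have wf0: "wf_graph Vs (X - edge rv d0) vx rv"
    using wf by (auto simp: wf_graph_def)
  assume "gwalk Vs (X - edge rv d0) vx rv (vx d0) ds (vx (rv d0))"
  then obtain p where p: "gpath Vs (X - edge rv d0) vx rv (vx d0) p (vx (rv d0))"
    using gwalk_to_gpath[OF wf0, of _ ds _ "\<lambda>_. 0"] by blast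
  then have pw: "gwalk Vs (X - edge rv d0) vx rv (vx d0) p (vx (rv d0))"
    and de: "distinct (map (edge rv) p)"
    using gpath_distinct_edges[OF wf0] by (auto simp: gpath_def)
  have "gwalk Vs X vx rv (vx (rv d0)) [rv d0] (vx d0)"
    using wf rv_closed d0 by (auto simp: gwalk_Cons[OF wf] wf_graph_def)
  then have "gwalk Vs X vx rv (vx d0) (p @ [rv d0]) (vx d0)"
    using gwalk_mono[OF pw] gwalk_append[OF wf] by blast
  moreover have "edge rv d0 \<notin> edge rv ` set p"
    using gwalk_set[OF pw] by (auto simp: edge_def doubleton_eq_iff)
  then have "distinct (map (edge rv) (p @ [rv d0]))"
    using de rv_closed d0 by (auto simp: edge_def insert_commute)
  ultimately show False using ac unfolding gacyclic_def by blast
qed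

lemma gshortest_exists:
  assumes fin: "finite Vs" "finite X" and wf: "wf_graph Vs X vx rv"
    and nonneg: "\<forall>d\<in>X. 0 \<le> w d" and walk: "gwalk Vs X vx rv u ds v"
  shows "\<exists>p. gshortest Vs X vx rv w u p v"
proof -
  define PS where "PS = {p. gpath Vs X vx rv u p v}"
  have "PS \<subseteq> {p. set p \<subseteq> X \<and> length p \<le> card Vs}"
  proof
    fix p assume "p \<in> PS"
    then have p: "gwalk Vs X vx rv u p v" "distinct (gverts vx rv u p)"
      by (auto simp: PS_def gpath_def)
    have "card (set (gverts vx rv u p)) \<le> card Vs"
      using gverts_subset[OF wf p(1)] fin by (intro card_mono)
    then show "p \<in> {p. set p \<subseteq> X \<and> length p \<le> card Vs}"
      using distinct_card[OF p(2)] gwalk_set[OF p(1)] by simp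
  qed
  then have "finite (len w ` PS)" using finite_lists_length_le[OF fin(2)] finite_subset by blast
  moreover have "PS \<noteq> {}"
    using gwalk_to_gpath[OF wf walk, of w] nonneg gwalk_set[OF walk] by (auto simp: PS_def)
  ultimately have "Min (len w ` PS) \<in> len w ` PS" by (intro Min_in) auto
  then obtain p where p: "p \<in> PS" "len w p = Min (len w ` PS)" by auto
  with \<open>finite (len w ` PS)\<close> have p_min: "\<forall>q\<in>PS. len w p \<le> len w q" by simp
  have "len w p \<le> len w q" if q: "gwalk Vs X vx rv u q v" for q
  proof -
    obtain q' where "gpath Vs X vx rv u q' v" "len w q' \<le> len w q"
      using gwalk_to_gpath[OF wf q] nonneg gwalk_set[OF q] by blast
    then show ?thesis using p_min by (force simp: PS_def)
  qed
  then show ?thesis using p(1) by (auto simp: PS_def gshortest_def)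
qed

lemma gshortest_subpath_le:
  assumes wf: "wf_graph Vs X vx rv" and sp: "gshortest Vs X vx rv w s \<sigma> t"
    and ij: "i \<le> j" "j \<le> length \<sigma>"
    and r: "gwalk Vs X vx rv (gverts vx rv s \<sigma> ! i) r (gverts vx rv s \<sigma> ! j)"
  shows "len w (take (j - i) (drop i \<sigma>)) \<le> len w r"
proof -
  have \<sigma>: "gwalk Vs X vx rv s \<sigma> t" using sp by (simp add: gshortest_def gpath_def)
  have "gwalk Vs X vx rv s (take i \<sigma>) (gverts vx rv s \<sigma> ! i)"
    and "gwalk Vs X vx rv (gverts vx rv s \<sigma> ! j) (drop j \<sigma>) t"
    using gwalk_take[OF wf \<sigma>] gwalk_drop[OF wf \<sigma>] ij by auto
  with r have "gwalk Vs X vx rv s (take i \<sigma> @ r @ drop j \<sigma>) t"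
    unfolding gwalk_append[OF wf] by blast
  then have "len w \<sigma> \<le> len w (take i \<sigma> @ r @ drop j \<sigma>)"
    using sp by (simp add: gshortest_def)
  moreover have "\<sigma> = take i \<sigma> @ take (j - i) (drop i \<sigma>) @ drop j \<sigma>"
    using ij by (metis append_take_drop_id drop_drop le_add_diff_inverse2)
  then have "len w \<sigma> = len w (take i \<sigma>) + len w (take (j - i) (drop i \<sigma>)) + len w (drop j \<sigma>)"
    by (metis len_append add.assoc)
  ultimately show ?thesis by (simp add: len_append)
qed

lemma last_exit:
  fixes P :: "nat \<Rightarrow> bool"
  assumes "P 0" "\<not> P n"
  shows "\<exists>j<n. P j \<and> (\<forall>i. j < i \<and> i \<le> n \<longrightarrow> \<not> P i)"
  using assms(2)
proof (induction n)
  case (Suc n)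
  then show ?case
    by (cases "P n") (use assms(1) in \<open>auto simp: le_Suc_eq intro: less_SucI\<close>)
qed (use assms(1) in simp)

lemma odd_length_filter_neq:
  "odd (length (filter (\<lambda>y. P y \<noteq> Q y) l)) \<longleftrightarrow>
    odd (length (filter P l)) \<noteq> odd (length (filter Q l))"
  by (induction l) auto

lemma odd_card_neq:
  assumes "finite U"
  shows "odd (card {x\<in>U. P x \<noteq> Q x}) \<longleftrightarrow> odd (card {x\<in>U. P x}) \<noteq> odd (card {x\<in>U. Q x})"
proof -
  have e1: "{x\<in>U. P x} = {x\<in>U. P x \<and> Q x} \<union> {x\<in>U. P x \<and> \<not> Q x}"
    and e2: "{x\<in>U. Q x} = {x\<in>U. P x \<and> Q x} \<union> {x\<in>U. \<not> P x \<and> Q x}"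
    and e3: "{x\<in>U. P x \<noteq> Q x} = {x\<in>U. P x \<and> \<not> Q x} \<union> {x\<in>U. \<not> P x \<and> Q x}"
    by auto
  have "card {x\<in>U. P x} = card {x\<in>U. P x \<and> Q x} + card {x\<in>U. P x \<and> \<not> Q x}"
    unfolding e1 using assms by (intro card_Un_disjoint) auto
  moreover have "card {x\<in>U. Q x} = card {x\<in>U. P x \<and> Q x} + card {x\<in>U. \<not> P x \<and> Q x}"
    unfolding e2 using assms by (intro card_Un_disjoint) auto
  moreover have "card {x\<in>U. P x \<noteq> Q x} = card {x\<in>U. P x \<and> \<not> Q x} + card {x\<in>U. \<not> P x \<and> Q x}"
    unfolding e3 using assms by (intro card_Un_disjoint) auto
  ultimately show ?thesis by auto
qed

lemma even_card_involution:
  assumes "finite Y" "\<forall>x\<in>Y. r x \<in> Y \<and> r x \<noteq> x \<and> r (r x) = x"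
  shows "even (card Y)"
  using assms
proof (induction "card Y" arbitrary: Y rule: less_induct)
  case less
  show ?case
  proof (cases "Y = {}")
    case False
    then obtain x where x: "x \<in> Y" by auto
    define Y' where "Y' = Y - {x, r x}"
    have rx: "r x \<in> Y" "r x \<noteq> x" "r (r x) = x" using less.prems x by auto
    then have "card Y = card Y' + 2"
      using less.prems(1) x card_mono[of Y "{x, r x}"] by (simp add: Y'_def card_Diff_subset)
    moreover have "\<forall>y\<in>Y'. r y \<in> Y' \<and> r y \<noteq> y \<and> r (r y) = y"
    proof
      fix y assume y: "y \<in> Y'"
      then have yY: "y \<in> Y" "y \<noteq> x" "y \<noteq> r x" by (auto simp: Y'_def)
      then have "r y \<in> Y" "r y \<noteq> y" "r (r y) = y" using less.prems by auto
      moreover have "r y \<noteq> x" "r y \<noteq> r x" using yY rx calculation(3) by metis+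
      ultimately show "r y \<in> Y' \<and> r y \<noteq> y \<and> r (r y) = y" by (auto simp: Y'_def)
    qed
    then have "even (card Y')"
      using less.hyps less.prems(1) calculation by (simp add: Y'_def)
    ultimately show ?thesis by simp
  qed simp
qed

lemma length_filter_le_1:
  assumes "distinct (map f l)" "\<forall>x\<in>set l. P x \<longrightarrow> f x = e"
  shows "length (filter P l) \<le> 1"
proof -
  have "distinct (map f (filter P l))" using assms(1) by (simp add: distinct_map_filter)
  moreover have "set (map f (filter P l)) \<subseteq> {e}" using assms(2) by auto
  then have "card (set (map f (filter P l))) \<le> 1" using card_mono[of "{e}"] by fastforce
  ultimately show ?thesis by (metis distinct_card length_map)
qed

lemma sdiff_mem: "x \<in> sdiff A B \<longleftrightarrow> (x \<in> A) \<noteq> (x \<in> B)"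
  by (auto simp: sdiff_def)

lemma sdiff_assoc: "sdiff (sdiff A B) C = sdiff A (sdiff B C)"
  by (auto simp: sdiff_def)

lemma sdiff_commute: "sdiff A B = sdiff B A"
  by (auto simp: sdiff_def)

lemma sdiff_empty [simp]: "sdiff {} A = A" "sdiff A {} = A"
  by (auto simp: sdiff_def)

lemma sdiff_self [simp]: "sdiff A A = {}"
  by (auto simp: sdiff_def)

lemma sdiff_cancel [simp]: "sdiff A (sdiff A B) = B"
  by (auto simp: sdiff_def)

lemma sdiff_eq_self_iff [simp]: "sdiff A B = A \<longleftrightarrow> B = {}"
  by (auto simp: sdiff_def)

lemma sdiff_left_cancel: "sdiff A B = sdiff A C \<longleftrightarrow> B = C"
proof
  assume "sdiff A B = sdiff A C"
  then have "sdiff A (sdiff A B) = sdiff A (sdiff A C)" by (rule arg_cong)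
  then show "B = C" by (simp only: sdiff_cancel)
qed simp

section \<open>Signatures of walks\<close>

lemma fold_sig: "fold (\<lambda>d h. sdiff h (sig rv es \<alpha> d)) c h = sdiff h (wsig rv es \<alpha> c)"
proof (induction c arbitrary: h)
  case (Cons d c)
  have "wsig rv es \<alpha> (d # c) = sdiff (sig rv es \<alpha> d) (wsig rv es \<alpha> c)"
    using Cons.IH[of "sdiff {} (sig rv es \<alpha> d)"] by (simp add: wsig_def)
  then show ?case using Cons.IH by (simp add: sdiff_assoc)
qed (simp add: wsig_def)

lemma wsig_Nil [simp]: "wsig rv es \<alpha> [] = {}"
  by (simp add: wsig_def)

lemma wsig_Cons: "wsig rv es \<alpha> (d # c) = sdiff (sig rv es \<alpha> d) (wsig rv es \<alpha> c)"
  using fold_sig[of rv es \<alpha> c "sdiff {} (sig rv es \<alpha> d)"] by (simp add: wsig_def)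

lemma wsig_append: "wsig rv es \<alpha> (a @ b) = sdiff (wsig rv es \<alpha> a) (wsig rv es \<alpha> b)"
  by (induction a) (auto simp: wsig_Cons sdiff_assoc)

lemma wsig_rotate: "wsig rv es \<alpha> (drop k c @ take k c) = wsig rv es \<alpha> c"
proof -
  have "wsig rv es \<alpha> (drop k c @ take k c) = wsig rv es \<alpha> (take k c @ drop k c)"
    unfolding wsig_append by (rule sdiff_commute)
  then show ?thesis by (simp only: append_take_drop_id)
qed

lemma wsig_mem: "i \<in> wsig rv es \<alpha> c \<longleftrightarrow> odd (length (filter (\<lambda>d. i \<in> sig rv es \<alpha> d) c))"
  by (induction c) (auto simp: wsig_Cons sdiff_mem)

lemma sig_subset: "sig rv es \<alpha> d \<subseteq> {..<length es}"
  by (auto simp: sig_def)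

lemma wsig_subset: "wsig rv es \<alpha> c \<subseteq> {..<length es}"
  by (induction c) (auto simp: wsig_Cons sdiff_def sig_def)

lemma sdiff_sig_subset: "h \<subseteq> {..<length es} \<Longrightarrow> sdiff h (sig rv es \<alpha> d) \<subseteq> {..<length es}"
  using sig_subset[of rv es \<alpha> d] by (auto simp: sdiff_def)

lemma funpow_returns:
  assumes "bij_betw f D D" "finite D" "y \<in> D"
  shows "\<exists>n>0. (f ^^ n) y = y"
proof -
  have fD: "bij_betw (f ^^ n) D D" for n using bij_betw_funpow[OF assms(1)] .
  have "(\<lambda>n. (f ^^ n) y) ` {0..card D} \<subseteq> D" using fD assms(3) by (auto simp: bij_betw_def)
  then have "card ((\<lambda>n. (f ^^ n) y) ` {0..card D}) \<le> card D"
    using card_mono[OF assms(2)] by blast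
  then have "card ((\<lambda>n. (f ^^ n) y) ` {0..card D}) < card {0..card D}"
    by simp
  then have "\<not> inj_on (\<lambda>n. (f ^^ n) y) {0..card D}"
    using pigeonhole by blast
  then obtain i j where "i \<noteq> j" "(f ^^ i) y = (f ^^ j) y"
    unfolding inj_on_def by auto
  then obtain a b where ab: "a < b" "(f ^^ a) y = (f ^^ b) y"
    by (metis nat_neq_iff)
  have "(f ^^ a) ((f ^^ (b - a)) y) = (f ^^ b) y"
    using ab(1) by (metis funpow_add comp_apply le_add_diff_inverse less_imp_le)
  then have "(f ^^ a) ((f ^^ (b - a)) y) = (f ^^ a) y" using ab(2) by simp
  moreover have "(f ^^ (b - a)) y \<in> D" using fD assms(3) by (auto simp: bij_betw_def)
  ultimately have "(f ^^ (b - a)) y = y"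
    using fD[of a] assms(3) by (auto simp: bij_betw_def inj_on_def)
  then show ?thesis using ab(1) by (intro exI[of _ "b - a"]) auto
qed

lemma orb_apply:
  assumes "bij_betw f D D" "finite D" "y \<in> D"
  shows "orb f (f y) = orb f y"
proof -
  obtain n where n: "n > 0" "(f ^^ n) y = y" using funpow_returns[OF assms] by blast
  have earlier: "(f ^^ m) y = (f ^^ (m + n - 1)) (f y)" for m
  proof -
    have "(f ^^ (m + n - 1)) (f y) = (f ^^ Suc (m + n - 1)) y" by (simp add: funpow_swap1)
    also have "\<dots> = (f ^^ m) y" using n by (simp add: funpow_add)
    finally show ?thesis by simp
  qed
  have fwd: "(f ^^ m) (f y) = (f ^^ Suc m) y" for m by (simp add: funpow_swap1)
  show ?thesis
  proof (intro set_eqI iffI)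
    fix z assume "z \<in> orb f (f y)"
    then show "z \<in> orb f y" unfolding orb_def fwd by blast
  next
    fix z assume "z \<in> orb f y"
    then show "z \<in> orb f (f y)" unfolding orb_def earlier by blast
  qed
qed

section \<open>Chains on a surface map\<close>

text \<open>A Z2-chain of edges is represented by its indicator on darts, which takes the same value
  on both darts of an edge.\<close>

definition walk_chain :: "('d \<Rightarrow> 'd) \<Rightarrow> 'd list \<Rightarrow> 'd \<Rightarrow> bool" where
  "walk_chain rv c d \<longleftrightarrow> odd (length (filter (\<lambda>x. x \<in> edge rv d) c))"

definition bdry_chain :: "('d \<Rightarrow> 'd) \<Rightarrow> ('d \<Rightarrow> 'd) \<Rightarrow> 'd set set \<Rightarrow> 'd \<Rightarrow> bool" where
  "bdry_chain rv sc S d \<longleftrightarrow> (face rv sc d \<in> S) \<noteq> (face rv sc (rv d) \<in> S)"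

lemma walk_chain_Cons: "walk_chain rv (d # c) y \<longleftrightarrow> (d \<in> edge rv y) \<noteq> walk_chain rv c y"
  by (simp add: walk_chain_def)

lemma bdry_chain_sdiff:
  "bdry_chain rv sc (sdiff S1 S2) d \<longleftrightarrow> bdry_chain rv sc S1 d \<noteq> bdry_chain rv sc S2 d"
  by (auto simp: bdry_chain_def sdiff_mem)

lemma in_edge: "x \<in> edge rv d \<longleftrightarrow> x = d \<or> x = rv d"
  by (auto simp: edge_def)

lemma edge_eqD: "edge rv d = edge rv d' \<Longrightarrow> d' = d \<or> d' = rv d"
  by (auto simp: edge_def doubleton_eq_iff)

locale surface_map =
  fixes D :: "'d set" and rv sc :: "'d \<Rightarrow> 'd" and Bd :: "'d set set" and w :: "'d \<Rightarrow> real"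
  assumes surface: "surface_graph D rv sc Bd w"
begin

lemma finite_darts: "finite D"
  using surface by (simp add: surface_graph_def)

lemma rv_in: "d \<in> D \<Longrightarrow> rv d \<in> D"
  using surface by (simp add: surface_graph_def)

lemma rv_neq: "d \<in> D \<Longrightarrow> rv d \<noteq> d"
  using surface by (simp add: surface_graph_def)

lemma rv_rv [simp]: "d \<in> D \<Longrightarrow> rv (rv d) = d"
  using surface by (simp add: surface_graph_def)

lemma sc_bij: "bij_betw sc D D"
  using surface by (simp add: surface_graph_def)

lemma w_nonneg: "d \<in> D \<Longrightarrow> 0 \<le> w d"
  using surface by (simp add: surface_graph_def)

lemma w_rv: "d \<in> D \<Longrightarrow> w (rv d) = w d"
  using surface by (simp add: surface_graph_def)

lemma rv_closed: "\<forall>d\<in>D. rv d \<in> D \<and> rv (rv d) = d"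
  using rv_in by simp

lemma edge_rv [simp]: "d \<in> D \<Longrightarrow> edge rv (rv d) = edge rv d"
  by (auto simp: edge_def)

lemma in_edge_commute: "x \<in> D \<Longrightarrow> y \<in> D \<Longrightarrow> x \<in> edge rv y \<longleftrightarrow> y \<in> edge rv x"
  by (auto simp: edge_def)

lemma edge_eq_if_in_edge: "d \<in> D \<Longrightarrow> x \<in> edge rv d \<Longrightarrow> edge rv x = edge rv d"
  by (auto simp: edge_def)

lemma walk_chain_rv: "d \<in> D \<Longrightarrow> walk_chain rv c (rv d) = walk_chain rv c d"
  by (simp add: walk_chain_def)

lemma bdry_chain_rv: "d \<in> D \<Longrightarrow> bdry_chain rv sc S (rv d) = bdry_chain rv sc S d"
  by (auto simp: bdry_chain_def)

lemma vert_sc: "d \<in> D \<Longrightarrow> vert sc (sc d) = vert sc d"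
  unfolding vert_def using orb_apply[OF sc_bij finite_darts] by blast

lemma face_rv: "d \<in> D \<Longrightarrow> face rv sc (rv d) = face rv sc (sc d)"
proof -
  assume d: "d \<in> D"
  have "bij_betw rv D D" by (rule bij_betw_byWitness[of _ rv]) (auto simp: rv_in)
  then have "bij_betw (sc \<circ> rv) D D" using bij_betw_trans sc_bij by blast
  then show ?thesis
    using orb_apply[OF _ finite_darts rv_in[OF d], of "sc \<circ> rv"] d by (simp add: face_def)
qed

lemma vert_in_Verts: "d \<in> D \<Longrightarrow> vert sc d \<in> Verts D sc"
  by (simp add: Verts_def)

lemma face_in_Faces: "d \<in> D \<Longrightarrow> face rv sc d \<in> Faces D rv sc"
  by (simp add: Faces_def)

lemma wf_graph_Verts: "X \<subseteq> D \<Longrightarrow> wf_graph (Verts D sc) X (vert sc) rv"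
  by (auto simp: wf_graph_def vert_in_Verts rv_in)

lemma wf_graph_Faces: "X \<subseteq> D \<Longrightarrow> wf_graph (Faces D rv sc) X (face rv sc) rv"
  by (auto simp: wf_graph_def face_in_Faces rv_in)

lemmas gwalk_Cons_Verts = gwalk_Cons[OF wf_graph_Verts[OF order_refl]]

lemma pwalk_set: "pwalk D rv sc u c v \<Longrightarrow> set c \<subseteq> D"
  by (auto simp: pwalk_def gwalk_def)

lemma oddset_mem: "set c \<subseteq> D \<Longrightarrow> d \<in> D \<Longrightarrow> edge rv d \<in> oddset rv c \<longleftrightarrow> walk_chain rv c d"
proof
  assume "edge rv d \<in> oddset rv c"
  then show "walk_chain rv c d" by (auto simp: oddset_def walk_chain_def)
next
  assume c: "set c \<subseteq> D" and d: "d \<in> D" and "walk_chain rv c d"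
  then obtain x where x: "x \<in> set c" "x \<in> edge rv d"
    by (auto simp: walk_chain_def filter_empty_conv dest!: odd_pos)
  then have "edge rv x = edge rv d" using d edge_eq_if_in_edge by blast
  moreover have "odd (length (filter (\<lambda>y. y \<in> edge rv x) c))"
    using calculation \<open>walk_chain rv c d\<close> by (simp add: walk_chain_def)
  ultimately show "edge rv d \<in> oddset rv c"
    using x(1) unfolding oddset_def by (metis (mono_tags, lifting) mem_Collect_eq)
qed

lemma bdry_mem: "d \<in> D \<Longrightarrow> edge rv d \<in> bdry D rv sc S \<longleftrightarrow> bdry_chain rv sc S d"
proof
  assume d: "d \<in> D" and "edge rv d \<in> bdry D rv sc S"
  then obtain x where "edge rv d = edge rv x" "x \<in> D" "bdry_chain rv sc S x"
    by (auto simp: bdry_def bdry_chain_def)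
  then have "x = d \<or> x = rv d" using edge_eqD by metis
  then show "bdry_chain rv sc S d" using \<open>bdry_chain rv sc S x\<close> d bdry_chain_rv by auto
qed (auto simp: bdry_def bdry_chain_def)

lemma homologous_iff:
  assumes "set c1 \<subseteq> D" "set c2 \<subseteq> D"
  shows "homologous D rv sc Bd c1 c2 \<longleftrightarrow>
    (\<exists>S. S \<subseteq> Faces D rv sc - Bd \<and>
      (\<forall>d\<in>D. (walk_chain rv c1 d \<noteq> walk_chain rv c2 d) = bdry_chain rv sc S d))"
proof -
  have edge_iff: "edge rv d \<in> sdiff (oddset rv c1) (oddset rv c2) \<longleftrightarrow>
      walk_chain rv c1 d \<noteq> walk_chain rv c2 d" if "d \<in> D" for d
    using that assms by (simp add: sdiff_mem oddset_mem)
  have "sdiff (oddset rv c1) (oddset rv c2) = bdry D rv sc S \<longleftrightarrow>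
      (\<forall>d\<in>D. (walk_chain rv c1 d \<noteq> walk_chain rv c2 d) = bdry_chain rv sc S d)" for S
  proof
    assume "sdiff (oddset rv c1) (oddset rv c2) = bdry D rv sc S"
    then show "\<forall>d\<in>D. (walk_chain rv c1 d \<noteq> walk_chain rv c2 d) = bdry_chain rv sc S d"
      using edge_iff bdry_mem by auto
  next
    assume H: "\<forall>d\<in>D. (walk_chain rv c1 d \<noteq> walk_chain rv c2 d) = bdry_chain rv sc S d"
    show "sdiff (oddset rv c1) (oddset rv c2) = bdry D rv sc S"
    proof (rule set_eqI)
      fix e
      have "e \<in> sdiff (oddset rv c1) (oddset rv c2) \<Longrightarrow> \<exists>d\<in>D. e = edge rv d"
        using assms by (auto simp: sdiff_def oddset_def)
      moreover have "e \<in> bdry D rv sc S \<Longrightarrow> \<exists>d\<in>D. e = edge rv d"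
        by (auto simp: bdry_def)
      ultimately show "e \<in> sdiff (oddset rv c1) (oddset rv c2) \<longleftrightarrow> e \<in> bdry D rv sc S"
        using H edge_iff bdry_mem by metis
    qed
  qed
  then show ?thesis unfolding homologous_def by blast
qed

lemma wsig_bit:
  assumes c: "set c \<subseteq> D" and \<alpha>: "\<forall>i<length es. set (\<alpha> i) \<subseteq> D"
  shows "i \<in> wsig rv es \<alpha> c \<longleftrightarrow> i < length es \<and> odd (length (filter (walk_chain rv c) (\<alpha> i)))"
proof (cases "i < length es")
  case True
  have "odd (length (filter (\<lambda>d. i \<in> sig rv es \<alpha> d) c)) =
      odd (length (filter (walk_chain rv c) (\<alpha> i)))"
    using c
  proof (induction c)
    case (Cons d c)
    have "filter (\<lambda>y. d \<in> edge rv y) (\<alpha> i) = filter (\<lambda>y. y \<in> edge rv d) (\<alpha> i)"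
      using Cons.prems \<alpha> True in_edge_commute by (intro filter_cong) auto
    then show ?case
      using Cons True unfolding walk_chain_Cons odd_length_filter_neq by (simp add: sig_def)
  qed (simp add: walk_chain_def)
  then show ?thesis using True by (simp add: wsig_mem)
qed (use wsig_subset in blast)

lemma bdry_chain_parity_dual_walk:
  assumes "X \<subseteq> D" "gwalk (Faces D rv sc) X (face rv sc) rv f ds f'"
  shows "odd (length (filter (bdry_chain rv sc S) ds)) \<longleftrightarrow> (f \<in> S) \<noteq> (f' \<in> S)"
  using assms(2)
proof (induction ds arbitrary: f)
  case (Cons d ds)
  then show ?case by (auto simp: gwalk_Cons[OF wf_graph_Faces[OF assms(1)]] bdry_chain_def)
qed simp

definition cut_count :: "'d set set \<Rightarrow> ('d \<Rightarrow> bool) \<Rightarrow> nat" where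
  "cut_count A Z = card {d\<in>D. vert sc d \<in> A \<and> vert sc (rv d) \<notin> A \<and> Z d}"

lemma odd_cut_count_neq:
  "odd (cut_count A (\<lambda>d. P d \<noteq> Q d)) \<longleftrightarrow> odd (cut_count A P) \<noteq> odd (cut_count A Q)"
  using odd_card_neq[of "{d\<in>D. vert sc d \<in> A \<and> vert sc (rv d) \<notin> A}" P Q] finite_darts
  unfolding cut_count_def by (simp add: conj_assoc)

lemma odd_cut_count_edge:
  assumes d: "d \<in> D"
  shows "odd (cut_count A (\<lambda>x. d \<in> edge rv x)) \<longleftrightarrow> (vert sc d \<in> A) \<noteq> (vert sc (rv d) \<in> A)"
proof -
  define K where "K = {x\<in>{d, rv d}. vert sc x \<in> A \<and> vert sc (rv x) \<notin> A}"
  have "{x\<in>D. vert sc x \<in> A \<and> vert sc (rv x) \<notin> A \<and> d \<in> edge rv x} = K"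
    using d rv_in by (auto simp: edge_def K_def)
  then have "cut_count A (\<lambda>x. d \<in> edge rv x) = card K" by (simp add: cut_count_def)
  moreover have "rv (rv d) = d" "rv d \<noteq> d" using d rv_neq by auto
  then have "K = (if vert sc d \<in> A \<and> vert sc (rv d) \<notin> A then {d}
      else if vert sc d \<notin> A \<and> vert sc (rv d) \<in> A then {rv d} else {})"
    by (auto simp: K_def)
  ultimately show ?thesis by simp
qed

lemma odd_cut_count_walk:
  assumes "pwalk D rv sc u c v"
  shows "odd (cut_count A (walk_chain rv c)) \<longleftrightarrow> (u \<in> A) \<noteq> (v \<in> A)"
  using assms unfolding pwalk_def
proof (induction c arbitrary: u)
  case (Cons d c)
  then have d: "d \<in> D" "vert sc d = u" "gwalk (Verts D sc) D (vert sc) rv (vert sc (rv d)) c v"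
    by (auto simp: gwalk_Cons_Verts)
  have "walk_chain rv (d # c) = (\<lambda>x. (d \<in> edge rv x) \<noteq> walk_chain rv c x)"
    by (simp add: walk_chain_Cons fun_eq_iff)
  then show ?case
    using odd_cut_count_neq odd_cut_count_edge[OF d(1)] Cons.IH[OF d(3)] d(2) by auto
qed (simp add: cut_count_def walk_chain_def)

text \<open>Going around a vertex with \<open>sc\<close>, the face changes between inside and outside of S exactly
  at the boundary darts, so each vertex of A has evenly many; those ending in A pair up under
  \<open>rv\<close>.\<close>

lemma even_cut_count_bdry: "even (cut_count A (bdry_chain rv sc S))"
proof -
  define U where "U = {x\<in>D. vert sc x \<in> A}"
  define P where "P = (\<lambda>x. face rv sc x \<in> S)"
  have fU: "finite U" using finite_darts by (simp add: U_def)
  have scD: "x \<in> D \<Longrightarrow> sc x \<in> D" for x using sc_bij by (auto simp: bij_betw_def)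
  have "sc ` {x\<in>U. P (sc x)} = {x\<in>U. P x}"
  proof (intro set_eqI iffI)
    fix y assume "y \<in> {x\<in>U. P x}"
    moreover then obtain x where "x \<in> D" "y = sc x" using sc_bij by (auto simp: bij_betw_def U_def)
    ultimately show "y \<in> sc ` {x\<in>U. P (sc x)}" using vert_sc by (auto simp: U_def)
  qed (use scD vert_sc in \<open>auto simp: U_def\<close>)
  moreover have "inj_on sc {x\<in>U. P (sc x)}"
    using sc_bij by (auto simp: bij_betw_def U_def intro: inj_on_subset)
  ultimately have "card {x\<in>U. P (sc x)} = card {x\<in>U. P x}" using card_image by fastforce
  moreover have "{x\<in>U. bdry_chain rv sc S x} = {x\<in>U. P x \<noteq> P (sc x)}"
    by (auto simp: U_def P_def bdry_chain_def face_rv)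
  ultimately have "even (card {x\<in>U. bdry_chain rv sc S x})"
    using odd_card_neq[OF fU, of P "\<lambda>x. P (sc x)"] by simp
  moreover have "even (card {x\<in>U. vert sc (rv x) \<in> A \<and> bdry_chain rv sc S x})"
    using fU rv_in rv_neq bdry_chain_rv by (intro even_card_involution[of _ rv]) (auto simp: U_def finite_darts)
  moreover have "{x\<in>U. bdry_chain rv sc S x} =
      {x\<in>U. vert sc (rv x) \<in> A \<and> bdry_chain rv sc S x} \<union> {x\<in>U. vert sc (rv x) \<notin> A \<and> bdry_chain rv sc S x}"
    by auto
  then have "card {x\<in>U. bdry_chain rv sc S x} =
      card {x\<in>U. vert sc (rv x) \<in> A \<and> bdry_chain rv sc S x} +
      card {x\<in>U. vert sc (rv x) \<notin> A \<and> bdry_chain rv sc S x}"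
    using fU by (subst card_Un_disjoint[symmetric]) auto
  moreover have "cut_count A (bdry_chain rv sc S) = card {x\<in>U. vert sc (rv x) \<notin> A \<and> bdry_chain rv sc S x}"
    unfolding cut_count_def U_def by (simp add: conj_assoc)
  ultimately show ?thesis by simp
qed

end

section \<open>Signatures determine homology classes\<close>

locale tree_coforest_map = surface_map D rv sc Bd w
  for D :: "'d set" and rv sc :: "'d \<Rightarrow> 'd" and Bd :: "'d set set" and w :: "'d \<Rightarrow> real" +
  fixes T F :: "'d set set" and es :: "'d set list" and \<alpha> :: "nat \<Rightarrow> 'd list"
  assumes decomposition: "tree_coforest D rv sc Bd T F es \<alpha>"
begin

lemma T_Edges: "T \<subseteq> Edges D rv" and F_Edges: "F \<subseteq> Edges D rv"
  using decomposition by (simp_all add: tree_coforest_def)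

lemma Edges_closed: "e \<in> Edges D rv \<Longrightarrow> d \<in> e \<Longrightarrow> d \<in> D \<and> rv d \<in> e \<and> edge rv d = e"
  by (auto simp: Edges_def edge_def rv_in)

lemma T_subset: "\<Union>T \<subseteq> D" and rv_in_T: "d \<in> \<Union>T \<Longrightarrow> rv d \<in> \<Union>T"
  using T_Edges Edges_closed by blast+

lemma F_subset: "\<Union>F \<subseteq> D" and rv_in_F: "d \<in> \<Union>F \<Longrightarrow> rv d \<in> \<Union>F"
  and edge_in_F: "d \<in> \<Union>F \<Longrightarrow> edge rv d \<in> F"
  using F_Edges Edges_closed by blast+

lemma rv_closed_F: "\<forall>d\<in>\<Union>F. rv d \<in> \<Union>F \<and> rv (rv d) = d"
  using rv_in_F F_subset by auto

lemma finite_F: "finite F"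
  using F_Edges finite_darts unfolding Edges_def by (meson finite_imageI finite_subset)

lemma acyclic_T: "gacyclic (Verts D sc) (\<Union>T) (vert sc) rv"
  using decomposition by (simp add: tree_coforest_def)

lemma acyclic_F: "gacyclic (Faces D rv sc) (\<Union>F) (face rv sc) rv"
  using decomposition by (simp add: tree_coforest_def)

lemma unique_boundary_in_F_component:
  "\<forall>f\<in>Faces D rv sc. \<exists>!b. b \<in> Bd \<and> (\<exists>ds. gwalk (Faces D rv sc) (\<Union>F) (face rv sc) rv f ds b)"
  using decomposition unfolding tree_coforest_def by (elim conjE) assumption

lemma set_es: "set es = Edges D rv - T - F"
  using decomposition by (simp add: tree_coforest_def)

lemma edge_in_T_F_es: "d \<in> D \<Longrightarrow> edge rv d \<in> T \<or> edge rv d \<in> F \<or> edge rv d \<in> set es"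
  using set_es by (auto simp: Edges_def)

lemma dual_path_alpha:
  assumes "i < length es"
  shows "set (\<alpha> i) \<subseteq> \<Union>(insert (es ! i) F)"
    and "\<exists>d\<in>set (\<alpha> i). edge rv d = es ! i"
    and "distinct (map (edge rv) (\<alpha> i))"
    and "(\<exists>f. gwalk (Faces D rv sc) (\<Union>(insert (es ! i) F)) (face rv sc) rv f (\<alpha> i) f) \<or>
      (\<exists>b1 b2. b1 \<in> Bd \<and> b2 \<in> Bd \<and>
        gwalk (Faces D rv sc) (\<Union>(insert (es ! i) F)) (face rv sc) rv b1 (\<alpha> i) b2)"
  using decomposition assms unfolding tree_coforest_def gpath_def by blast+

lemma es_Edges: "i < length es \<Longrightarrow> es ! i \<in> Edges D rv"
  using set_es nth_mem by blast

lemma alpha_darts: "i < length es \<Longrightarrow> \<Union>(insert (es ! i) F) \<subseteq> D"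
  using es_Edges F_subset Edges_closed by blast

lemma alpha_subset: "i < length es \<Longrightarrow> set (\<alpha> i) \<subseteq> D"
  using dual_path_alpha(1) alpha_darts by blast

lemma even_bdry_chain_alpha:
  assumes S: "S \<subseteq> Faces D rv sc - Bd" and i: "i < length es"
  shows "even (length (filter (bdry_chain rv sc S) (\<alpha> i)))"
  using dual_path_alpha(4)[OF i]
proof (elim disjE exE conjE)
  fix f
  assume "gwalk (Faces D rv sc) (\<Union>(insert (es ! i) F)) (face rv sc) rv f (\<alpha> i) f"
  then show ?thesis using bdry_chain_parity_dual_walk[OF alpha_darts[OF i]] by blast
next
  fix b1 b2
  assume "b1 \<in> Bd" "b2 \<in> Bd"
    "gwalk (Faces D rv sc) (\<Union>(insert (es ! i) F)) (face rv sc) rv b1 (\<alpha> i) b2"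
  moreover have "b1 \<notin> S" "b2 \<notin> S" using S calculation by auto
  ultimately show ?thesis using bdry_chain_parity_dual_walk[OF alpha_darts[OF i]] by blast
qed

lemma homologous_imp_wsig_eq:
  assumes "homologous D rv sc Bd c1 c2" "set c1 \<subseteq> D" "set c2 \<subseteq> D"
  shows "wsig rv es \<alpha> c1 = wsig rv es \<alpha> c2"
proof -
  obtain S where S: "S \<subseteq> Faces D rv sc - Bd"
    "\<forall>d\<in>D. (walk_chain rv c1 d \<noteq> walk_chain rv c2 d) = bdry_chain rv sc S d"
    using assms(1) homologous_iff[OF assms(2,3)] by blast
  have "odd (length (filter (walk_chain rv c1) (\<alpha> i))) = odd (length (filter (walk_chain rv c2) (\<alpha> i)))"
    if i: "i < length es" for i
  proof -
    have "filter (bdry_chain rv sc S) (\<alpha> i) = filter (\<lambda>d. walk_chain rv c1 d \<noteq> walk_chain rv c2 d) (\<alpha> i)"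
      using S(2) alpha_subset[OF i] by (intro filter_cong) auto
    then show ?thesis
      using even_bdry_chain_alpha[OF S(1) i]
        odd_length_filter_neq[of "walk_chain rv c1" "walk_chain rv c2" "\<alpha> i"] by simp
  qed
  moreover have "\<forall>i<length es. set (\<alpha> i) \<subseteq> D" using alpha_subset by blast
  ultimately show ?thesis
    using wsig_bit[OF assms(2)] wsig_bit[OF assms(3)] by blast
qed

definition dual_side :: "'d \<Rightarrow> 'd set set" where
  "dual_side d1 = {g. \<exists>ds. gwalk (Faces D rv sc) (\<Union>F - edge rv d1) (face rv sc) rv (face rv sc d1) ds g}"

lemma wf_graph_F_minus_edge: "wf_graph (Faces D rv sc) (\<Union>F - edge rv d1) (face rv sc) rv"
  using F_subset by (intro wf_graph_Faces) auto

lemma rv_closed_F_minus_edge: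
  assumes "d1 \<in> D"
  shows "\<forall>d\<in>\<Union>F - edge rv d1. rv d \<in> \<Union>F - edge rv d1 \<and> rv (rv d) = d"
proof
  fix d assume d: "d \<in> \<Union>F - edge rv d1"
  then have "d \<in> D" using F_subset by blast
  moreover have "rv d \<notin> edge rv d1" using d assms calculation by (auto simp: in_edge) (metis rv_rv)
  ultimately show "rv d \<in> \<Union>F - edge rv d1 \<and> rv (rv d) = d" using d rv_in_F by auto
qed

lemma dual_side_subset: "dual_side d1 \<subseteq> Faces D rv sc"
  unfolding dual_side_def using gwalk_end_in[OF wf_graph_F_minus_edge] by blast

text \<open>Since the dual forest is acyclic, removing the edge of \<open>d1\<close> separates the faces of
  \<open>d1\<close> and \<open>rv d1\<close>.\<close>

lemma bdry_chain_dual_side: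
  assumes d1: "d1 \<in> \<Union>F" and d: "d \<in> \<Union>F"
  shows "bdry_chain rv sc (dual_side d1) d \<longleftrightarrow> edge rv d = edge rv d1"
proof -
  have d1D: "d1 \<in> D" and dD: "d \<in> D" using d1 d F_subset by blast+
  have out: "face rv sc (rv d1) \<notin> dual_side d1"
    using gacyclic_no_bypass[OF wf_graph_Faces[OF F_subset] rv_closed_F acyclic_F d1]
    unfolding dual_side_def by blast
  have in1: "face rv sc d1 \<in> dual_side d1" unfolding dual_side_def using face_in_Faces[OF d1D]
    by (intro CollectI exI[of _ "[]"]) simp
  have step: "face rv sc (rv x) \<in> dual_side d1"
    if "face rv sc x \<in> dual_side d1" "x \<in> \<Union>F - edge rv d1" for x
    using that gwalk_snoc[OF wf_graph_F_minus_edge] unfolding dual_side_def by blast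
  show ?thesis
  proof (cases "d \<in> edge rv d1")
    case True
    then have "d = d1 \<or> d = rv d1" by (simp add: in_edge)
    moreover have "edge rv d = edge rv d1" using edge_eq_if_in_edge[OF d1D True] .
    ultimately show ?thesis using out in1 d1D unfolding bdry_chain_def by fastforce
  next
    case False
    then have "d \<in> \<Union>F - edge rv d1" "rv d \<in> \<Union>F - edge rv d1"
      using d rv_closed_F_minus_edge[OF d1D] by auto
    then have "face rv sc d \<in> dual_side d1 \<longleftrightarrow> face rv sc (rv d) \<in> dual_side d1"
      using step[of d] step[of "rv d"] dD by auto
    moreover have "edge rv d \<noteq> edge rv d1" using False by (auto simp: edge_def)
    ultimately show ?thesis by (simp add: bdry_chain_def)
  qed
qed

text \<open>A boundary vertex on each side would lie in the component of both faces of the cut edge,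
  and the unique boundary vertex of that component would reconnect them without the edge.\<close>

lemma dual_side_boundary_free:
  assumes d0: "d0 \<in> \<Union>F"
  shows "dual_side d0 \<inter> Bd = {} \<or> dual_side (rv d0) \<inter> Bd = {}"
proof (rule ccontr)
  let ?X0 = "\<Union>F - edge rv d0"
  have d0D: "d0 \<in> D" using d0 F_subset by blast
  have wfF: "wf_graph (Faces D rv sc) (\<Union>F) (face rv sc) rv" using wf_graph_Faces[OF F_subset] .
  assume "\<not> (dual_side d0 \<inter> Bd = {} \<or> dual_side (rv d0) \<inter> Bd = {})"
  then obtain b0 b1 ds0 ds1 where b: "b0 \<in> Bd" "b1 \<in> Bd"
    and ds0: "gwalk (Faces D rv sc) ?X0 (face rv sc) rv (face rv sc d0) ds0 b0"
    and ds1: "gwalk (Faces D rv sc) ?X0 (face rv sc) rv (face rv sc (rv d0)) ds1 b1"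
    unfolding dual_side_def using d0D by auto
  have "gwalk (Faces D rv sc) (\<Union>F) (face rv sc) rv (face rv sc d0) ds0 b0"
    using gwalk_mono[OF ds0] by blast
  moreover have "gwalk (Faces D rv sc) (\<Union>F) (face rv sc) rv (face rv sc d0) (d0 # ds1) b1"
    using gwalk_mono[OF ds1] d0 face_in_Faces[OF d0D] by (simp add: gwalk_Cons[OF wfF])
  ultimately have "b0 = b1"
    using unique_boundary_in_F_component face_in_Faces[OF d0D] b by blast
  then have "gwalk (Faces D rv sc) ?X0 (face rv sc) rv (face rv sc d0) (ds0 @ rev (map rv ds1))
      (face rv sc (rv d0))"
    using ds0 gwalk_rev[OF wf_graph_F_minus_edge rv_closed_F_minus_edge[OF d0D] ds1]
      gwalk_append[OF wf_graph_F_minus_edge] by blast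
  then show False using gacyclic_no_bypass[OF wfF rv_closed_F acyclic_F d0] by blast
qed

lemma forest_edge_bdry:
  assumes f: "f \<in> F"
  shows "\<exists>S. S \<subseteq> Faces D rv sc - Bd \<and> (\<forall>d\<in>\<Union>F. bdry_chain rv sc S d \<longleftrightarrow> edge rv d = f)"
proof -
  obtain d0 where d0: "d0 \<in> \<Union>F" "f = edge rv d0"
    using f F_Edges unfolding Edges_def edge_def by blast
  have d0D: "d0 \<in> D" using d0 F_subset by blast
  have "\<forall>d\<in>\<Union>F. bdry_chain rv sc (dual_side d0) d \<longleftrightarrow> edge rv d = f"
    using bdry_chain_dual_side[OF d0(1)] d0(2) by blast
  moreover have "\<forall>d\<in>\<Union>F. bdry_chain rv sc (dual_side (rv d0)) d \<longleftrightarrow> edge rv d = f"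
    using bdry_chain_dual_side[OF rv_in_F[OF d0(1)]] d0(2) d0D by simp
  ultimately show ?thesis
    using dual_side_boundary_free[OF d0(1)] dual_side_subset[of d0] dual_side_subset[of "rv d0"]
    by (elim disjE) (intro exI conjI; blast)+
qed

lemma forest_edges_bdry:
  assumes "Fz \<subseteq> F"
  shows "\<exists>S. S \<subseteq> Faces D rv sc - Bd \<and> (\<forall>d\<in>\<Union>F. bdry_chain rv sc S d \<longleftrightarrow> edge rv d \<in> Fz)"
  using finite_subset[OF assms finite_F] assms
proof (induction Fz rule: finite_induct)
  case empty
  then show ?case by (intro exI[of _ "{}"]) (simp add: bdry_chain_def)
next
  case (insert f Fz)
  obtain S where S: "S \<subseteq> Faces D rv sc - Bd" "\<forall>d\<in>\<Union>F. bdry_chain rv sc S d \<longleftrightarrow> edge rv d \<in> Fz"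
    using insert.IH insert.prems by auto
  obtain Sf where Sf: "Sf \<subseteq> Faces D rv sc - Bd" "\<forall>d\<in>\<Union>F. bdry_chain rv sc Sf d \<longleftrightarrow> edge rv d = f"
    using forest_edge_bdry[of f] insert.prems by auto
  have "sdiff S Sf \<subseteq> Faces D rv sc - Bd" using S Sf by (auto simp: sdiff_def)
  moreover have "\<forall>d\<in>\<Union>F. bdry_chain rv sc (sdiff S Sf) d \<longleftrightarrow> edge rv d \<in> insert f Fz"
    using S(2) Sf(2) insert.hyps(2) by (auto simp: bdry_chain_sdiff)
  ultimately show ?case by blast
qed

text \<open>The fundamental cut of a tree edge is crossed by no other tree edge.\<close>

lemma tree_chain_eq_zero:
  assumes Z_rv: "\<forall>d\<in>D. Z (rv d) = Z d" and Z_T: "\<forall>d\<in>D. Z d \<longrightarrow> d \<in> \<Union>T"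
    and even: "\<forall>A. even (cut_count A Z)"
  shows "\<forall>d\<in>D. \<not> Z d"
proof (rule ccontr)
  assume "\<not> (\<forall>d\<in>D. \<not> Z d)"
  then obtain d0 where d0: "d0 \<in> D" "Z d0" by blast
  have d0T: "d0 \<in> \<Union>T" using Z_T d0 by blast
  let ?X0 = "\<Union>T - edge rv d0"
  define A where "A = {y. \<exists>ds. gwalk (Verts D sc) ?X0 (vert sc) rv (vert sc d0) ds y}"
  have wf0: "wf_graph (Verts D sc) ?X0 (vert sc) rv"
    using T_subset by (intro wf_graph_Verts) auto
  have "\<forall>d\<in>\<Union>T. rv d \<in> \<Union>T \<and> rv (rv d) = d" using rv_in_T T_subset by auto
  then have out: "vert sc (rv d0) \<notin> A"
    using gacyclic_no_bypass[OF wf_graph_Verts[OF T_subset] _ acyclic_T d0T] unfolding A_def by blast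
  have in0: "vert sc d0 \<in> A" unfolding A_def using vert_in_Verts[OF d0(1)]
    by (intro CollectI exI[of _ "[]"]) simp
  have step: "vert sc (rv d) \<in> A" if "vert sc d \<in> A" "d \<in> ?X0" for d
    using that gwalk_snoc[OF wf0] unfolding A_def by blast
  have "{d\<in>D. vert sc d \<in> A \<and> vert sc (rv d) \<notin> A \<and> Z d} = {d0}"
  proof (intro set_eqI iffI)
    fix d assume "d \<in> {d\<in>D. vert sc d \<in> A \<and> vert sc (rv d) \<notin> A \<and> Z d}"
    then have d: "d \<in> D" "vert sc d \<in> A" "vert sc (rv d) \<notin> A" "Z d" by auto
    then have "d \<in> edge rv d0" using step[of d] Z_T by blast
    then show "d \<in> {d0}" using d out by (auto simp: in_edge)
  qed (use d0 in0 out in auto)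
  then have "cut_count A Z = 1" by (simp add: cut_count_def)
  then show False using even by (metis odd_one)
qed

lemma chain_vanishes_on_cotree_edge:
  assumes i: "i < length es" and Z_rv: "\<forall>d\<in>D. Z (rv d) = Z d"
    and Z_F: "\<forall>d\<in>\<Union>F. \<not> Z d" and even: "even (length (filter Z (\<alpha> i)))"
    and d: "d \<in> D" "edge rv d = es ! i"
  shows "\<not> Z d"
proof -
  obtain d1 where d1: "d1 \<in> set (\<alpha> i)" "edge rv d1 = es ! i" using dual_path_alpha(2)[OF i] by blast
  have d1D: "d1 \<in> D" using d1 alpha_subset[OF i] by blast
  have "length (filter (\<lambda>x. x \<in> es ! i) (\<alpha> i)) \<le> 1"
  proof (rule length_filter_le_1[of "edge rv"])
    show "distinct (map (edge rv) (\<alpha> i))" using dual_path_alpha(3)[OF i] .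
    show "\<forall>x\<in>set (\<alpha> i). x \<in> es ! i \<longrightarrow> edge rv x = es ! i"
      using d1(2) d1D edge_eq_if_in_edge by metis
  qed
  moreover have "d1 \<in> set (filter (\<lambda>x. x \<in> es ! i) (\<alpha> i))" using d1 by (auto simp: edge_def)
  ultimately have single: "filter (\<lambda>x. x \<in> es ! i) (\<alpha> i) = [d1]"
    by (cases "filter (\<lambda>x. x \<in> es ! i) (\<alpha> i)") auto
  have "filter Z (\<alpha> i) = filter (\<lambda>x. x \<in> es ! i \<and> Z x) (\<alpha> i)"
    using dual_path_alpha(1)[OF i] Z_F by (intro filter_cong) auto
  also have "\<dots> = filter Z [d1]" by (metis filter_filter single)
  finally have "\<not> Z d1" using even by (cases "Z d1") auto
  moreover have "d = d1 \<or> d = rv d1" using d(2) d1(2) edge_eqD by metis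
  ultimately show ?thesis using Z_rv d1D by auto
qed

lemma chain_supported_on_tree:
  assumes Z_rv: "\<forall>d\<in>D. Z (rv d) = Z d" and Z_F: "\<forall>d\<in>\<Union>F. \<not> Z d"
    and even: "\<forall>i<length es. even (length (filter Z (\<alpha> i)))"
  shows "\<forall>d\<in>D. Z d \<longrightarrow> d \<in> \<Union>T"
proof (intro ballI impI)
  fix d assume d: "d \<in> D" "Z d"
  then consider "edge rv d \<in> T" | "edge rv d \<in> F" | i where "i < length es" "edge rv d = es ! i"
    using edge_in_T_F_es by (metis in_set_conv_nth)
  then show "d \<in> \<Union>T"
  proof cases
    case 1
    then show ?thesis by (auto simp: edge_def)
  next
    case 2
    then have "d \<in> \<Union>F" by (auto simp: edge_def)
    then show ?thesis using Z_F d(2) by blast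
  next
    case (3 i)
    then show ?thesis using chain_vanishes_on_cotree_edge[OF 3(1) Z_rv Z_F _ d(1) 3(2)] even d(2) by blast
  qed
qed

text \<open>The chain difference of the two walks, corrected on the dual forest by a face boundary,
  vanishes on the remaining cotree edges because the signatures agree, and on the tree because
  it crosses every vertex cut evenly.\<close>

lemma wsig_eq_imp_homologous:
  assumes c1: "pwalk D rv sc u1 c1 u1" and c2: "pwalk D rv sc u2 c2 u2"
    and eq: "wsig rv es \<alpha> c1 = wsig rv es \<alpha> c2"
  shows "homologous D rv sc Bd c1 c2"
proof -
  have c1D: "set c1 \<subseteq> D" and c2D: "set c2 \<subseteq> D" using c1 c2 pwalk_set by auto
  define diff where "diff = (\<lambda>d. walk_chain rv c1 d \<noteq> walk_chain rv c2 d)"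
  have diff_rv: "d \<in> D \<Longrightarrow> diff (rv d) = diff d" for d by (simp add: diff_def walk_chain_rv)
  obtain S where S: "S \<subseteq> Faces D rv sc - Bd"
    "\<forall>d\<in>\<Union>F. bdry_chain rv sc S d \<longleftrightarrow> edge rv d \<in> {f\<in>F. \<exists>d\<in>f. diff d}"
    using forest_edges_bdry[of "{f\<in>F. \<exists>d\<in>f. diff d}"] by auto
  define Z where "Z = (\<lambda>d. diff d \<noteq> bdry_chain rv sc S d)"
  have Z_rv: "\<forall>d\<in>D. Z (rv d) = Z d" by (simp add: Z_def diff_rv bdry_chain_rv)
  have Z_F: "\<forall>d\<in>\<Union>F. \<not> Z d"
  proof
    fix d assume d: "d \<in> \<Union>F"
    then have "edge rv d \<in> {f\<in>F. \<exists>d\<in>f. diff d} \<longleftrightarrow> diff d"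
      using diff_rv F_subset edge_in_F by (auto simp: in_edge edge_def)
    then show "\<not> Z d" using bspec[OF S(2) d] by (simp add: Z_def)
  qed
  have "even (length (filter Z (\<alpha> i)))" if i: "i < length es" for i
  proof -
    have "\<forall>i<length es. set (\<alpha> i) \<subseteq> D" using alpha_subset by blast
    then have "odd (length (filter (walk_chain rv c1) (\<alpha> i))) =
        odd (length (filter (walk_chain rv c2) (\<alpha> i)))"
      using wsig_bit[OF c1D] wsig_bit[OF c2D] eq i by blast
    moreover have "odd (length (filter Z (\<alpha> i))) \<longleftrightarrow>
        (odd (length (filter (walk_chain rv c1) (\<alpha> i))) \<noteq>
          odd (length (filter (walk_chain rv c2) (\<alpha> i)))) \<noteq>
        odd (length (filter (bdry_chain rv sc S) (\<alpha> i)))"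
      unfolding Z_def diff_def odd_length_filter_neq ..
    ultimately show ?thesis using even_bdry_chain_alpha[OF S(1) i] by simp
  qed
  then have Z_T: "\<forall>d\<in>D. Z d \<longrightarrow> d \<in> \<Union>T" using chain_supported_on_tree[OF Z_rv Z_F] by blast
  have cut_parity: "odd (cut_count A Z) \<longleftrightarrow>
      (odd (cut_count A (walk_chain rv c1)) \<noteq> odd (cut_count A (walk_chain rv c2))) \<noteq>
      odd (cut_count A (bdry_chain rv sc S))" for A
    unfolding Z_def diff_def odd_cut_count_neq ..
  have "even (cut_count A Z)" for A
    using cut_parity[of A] odd_cut_count_walk[OF c1, of A] odd_cut_count_walk[OF c2, of A] even_cut_count_bdry[of A S]
    by simp
  then have "\<forall>d\<in>D. \<not> Z d" using tree_chain_eq_zero[OF Z_rv Z_T] by blast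
  then have "\<forall>d\<in>D. diff d = bdry_chain rv sc S d" by (auto simp: Z_def)
  then show ?thesis using homologous_iff[OF c1D c2D] S(1) by (auto simp: diff_def)
qed

section \<open>The homology cover\<close>

abbreviation "CV \<equiv> cverts D sc es"
abbreviation "CX \<equiv> cdarts D es"
abbreviation "cvx' \<equiv> cvx sc"
abbreviation "crev' \<equiv> crev rv es \<alpha>"

lemma sig_rv: "d \<in> D \<Longrightarrow> sig rv es \<alpha> (rv d) = sig rv es \<alpha> d"
  by (simp add: sig_def)

lemma cdarts_cases:
  assumes "x \<in> CX"
  obtains d h where "x = (d, h)" "d \<in> D" "h \<subseteq> {..<length es}"
  using assms by (auto simp: cdarts_def)

lemma wf_graph_cover: "wf_graph CV CX cvx' crev'"
  unfolding wf_graph_def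
proof
  fix x assume "x \<in> CX"
  then obtain d h where "x = (d, h)" "d \<in> D" "h \<subseteq> {..<length es}" by (rule cdarts_cases)
  then show "cvx' x \<in> CV \<and> cvx' (crev' x) \<in> CV"
    using sdiff_sig_subset[of h es rv \<alpha> d]
    by (simp add: cvx_def crev_def cverts_def vert_in_Verts rv_in)
qed

lemma rv_closed_cover: "\<forall>x\<in>CX. crev' x \<in> CX \<and> crev' (crev' x) = x"
proof
  fix x assume "x \<in> CX"
  then obtain d h where "x = (d, h)" "d \<in> D" "h \<subseteq> {..<length es}" by (rule cdarts_cases)
  then show "crev' x \<in> CX \<and> crev' (crev' x) = x"
    using sdiff_sig_subset[of h es rv \<alpha> d]
    by (simp add: crev_def cdarts_def rv_in sig_rv sdiff_assoc)
qed

lemma finite_cverts: "finite CV" and finite_cdarts: "finite CX"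
  unfolding cverts_def cdarts_def Verts_def using finite_darts by simp_all

lemma cw_nonneg: "\<forall>x\<in>CX. 0 \<le> cw w x"
  unfolding cdarts_def cw_def using w_nonneg by auto

lemma map_fst_lift [simp]: "map fst (lift rv es \<alpha> h p) = p"
  by (induction p arbitrary: h) auto

lemma len_cw: "len (cw w) P = len w (map fst P)"
  by (induction P) (auto simp: cw_def)

lemma len_lift [simp]: "len (cw w) (lift rv es \<alpha> h p) = len w p"
  by (simp add: len_cw)

lemma gwalk_lift:
  assumes "pwalk D rv sc u p v" "h \<subseteq> {..<length es}"
  shows "gwalk CV CX cvx' crev' (u, h) (lift rv es \<alpha> h p) (v, sdiff h (wsig rv es \<alpha> p))"
  using assms unfolding pwalk_def
proof (induction p arbitrary: u h)
  case Nil
  then show ?case by (simp add: cverts_def)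
next
  case (Cons d p)
  then have d: "d \<in> D" "vert sc d = u" "u \<in> Verts D sc"
    "gwalk (Verts D sc) D (vert sc) rv (vert sc (rv d)) p v"
    by (auto simp: gwalk_Cons_Verts)
  have "gwalk CV CX cvx' crev' (vert sc (rv d), sdiff h (sig rv es \<alpha> d))
      (lift rv es \<alpha> (sdiff h (sig rv es \<alpha> d)) p)
      (v, sdiff (sdiff h (sig rv es \<alpha> d)) (wsig rv es \<alpha> p))"
    using Cons.IH[OF d(4) sdiff_sig_subset[OF Cons.prems(2)]] .
  moreover have "cvx' (crev' (d, h)) = (vert sc (rv d), sdiff h (sig rv es \<alpha> d))"
    by (simp add: cvx_def crev_def)
  moreover have "(u, h) \<in> CV" "(d, h) \<in> CX" "cvx' (d, h) = (u, h)"
    using d Cons.prems(2) by (auto simp: cverts_def cdarts_def cvx_def)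
  ultimately show ?case
    by (simp add: gwalk_Cons[OF wf_graph_cover] wsig_Cons sdiff_assoc)
qed

lemma gwalk_cover_proj:
  assumes "gwalk CV CX cvx' crev' (u, h) P y"
  shows "pwalk D rv sc u (map fst P) (fst y)" "snd y = sdiff h (wsig rv es \<alpha> (map fst P))"
    "P = lift rv es \<alpha> h (map fst P)"
proof -
  have "pwalk D rv sc u (map fst P) (fst y) \<and> snd y = sdiff h (wsig rv es \<alpha> (map fst P)) \<and>
      P = lift rv es \<alpha> h (map fst P)"
    using assms unfolding pwalk_def
  proof (induction P arbitrary: u h)
    case Nil
    then show ?case by (auto simp: cverts_def)
  next
    case (Cons x P)
    obtain d h' where x: "x = (d, h')" by (cases x)
    from Cons.prems have H: "(u, h) \<in> CV" "x \<in> CX" "cvx' x = (u, h)"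
        "gwalk CV CX cvx' crev' (cvx' (crev' x)) P y"
      by (auto simp: gwalk_Cons[OF wf_graph_cover])
    then have d: "d \<in> D" "h' = h" "vert sc d = u"
      using x by (auto simp: cvx_def cdarts_def)
    have "cvx' (crev' x) = (vert sc (rv d), sdiff h (sig rv es \<alpha> d))"
      using x d by (simp add: cvx_def crev_def)
    with Cons.IH H(4) have "gwalk (Verts D sc) D (vert sc) rv (vert sc (rv d)) (map fst P) (fst y) \<and>
        snd y = sdiff (sdiff h (sig rv es \<alpha> d)) (wsig rv es \<alpha> (map fst P)) \<and>
        P = lift rv es \<alpha> (sdiff h (sig rv es \<alpha> d)) (map fst P)"
      by simp
    moreover have "u \<in> Verts D sc" using H(1) by (simp add: cverts_def)
    ultimately show ?case using d x
      by (simp add: gwalk_Cons_Verts wsig_Cons sdiff_assoc)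
  qed
  then show "pwalk D rv sc u (map fst P) (fst y)" "snd y = sdiff h (wsig rv es \<alpha> (map fst P))"
    "P = lift rv es \<alpha> h (map fst P)"
    by blast+
qed

lemma map_fst_gverts_lift:
  "map fst (gverts cvx' crev' (u, h) (lift rv es \<alpha> h p)) = gverts (vert sc) rv u p"
  by (induction p arbitrary: u h) (auto simp: cvx_def crev_def)

lemma nth_gverts_lift:
  "j \<le> length p \<Longrightarrow> gverts cvx' crev' (u, h) (lift rv es \<alpha> h p) ! j =
     (gverts (vert sc) rv u p ! j, sdiff h (wsig rv es \<alpha> (take j p)))"
proof (induction p arbitrary: u h j)
  case (Cons d p)
  then show ?case by (cases j) (auto simp: cvx_def crev_def wsig_Cons sdiff_assoc)
qed simp

lemma z2_minimal_le:
  assumes "z2_minimal D rv sc Bd w x \<gamma>" "pwalk D rv sc u c u" "wsig rv es \<alpha> c = wsig rv es \<alpha> \<gamma>"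
  shows "len w \<gamma> \<le> len w c"
  using assms wsig_eq_imp_homologous[OF assms(2)] by (auto simp: z2_minimal_def)

lemma z2_minimal_if_wsig_eq:
  assumes "z2_minimal D rv sc Bd w x \<gamma>" "pwalk D rv sc v \<gamma>' v"
    and "wsig rv es \<alpha> \<gamma>' = wsig rv es \<alpha> \<gamma>" "len w \<gamma>' \<le> len w \<gamma>"
  shows "z2_minimal D rv sc Bd w v \<gamma>'"
  unfolding z2_minimal_def
proof (intro conjI allI impI)
  fix u c assume c: "pwalk D rv sc u c u \<and> homologous D rv sc Bd c \<gamma>'"
  then have "wsig rv es \<alpha> c = wsig rv es \<alpha> \<gamma>'"
    using homologous_imp_wsig_eq pwalk_set assms(2) by blast
  then show "len w \<gamma>' \<le> len w c" using z2_minimal_le[OF assms(1)] c assms(3,4) by force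
qed (rule assms(2))

text \<open>A cover walk between the two lifts of a vertex projects to a closed walk with the same
  signature, hence to a homologous one.\<close>

lemma cshortest_lift_if_z2_minimal:
  assumes min: "z2_minimal D rv sc Bd w v \<gamma>" and h: "h \<subseteq> {..<length es}"
    and dist: "distinct (gverts cvx' crev' (v, h) (lift rv es \<alpha> h \<gamma>))"
  shows "cshortest D rv sc es \<alpha> w (v, h) (lift rv es \<alpha> h \<gamma>) (v, sdiff h (wsig rv es \<alpha> \<gamma>))"
  unfolding cshortest_def gshortest_def gpath_def
proof (intro conjI allI impI)
  have \<gamma>: "pwalk D rv sc v \<gamma> v" using min by (simp add: z2_minimal_def)
  show "gwalk CV CX cvx' crev' (v, h) (lift rv es \<alpha> h \<gamma>) (v, sdiff h (wsig rv es \<alpha> \<gamma>))"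
    using gwalk_lift[OF \<gamma> h] .
  fix q assume "gwalk CV CX cvx' crev' (v, h) q (v, sdiff h (wsig rv es \<alpha> \<gamma>))"
  from gwalk_cover_proj[OF this] have "pwalk D rv sc v (map fst q) v"
    "wsig rv es \<alpha> (map fst q) = wsig rv es \<alpha> \<gamma>"
    by (simp_all add: sdiff_left_cancel)
  then show "len (cw w) (lift rv es \<alpha> h \<gamma>) \<le> len (cw w) q"
    using z2_minimal_le[OF min] by (simp add: len_cw)
qed (rule dist)

end

section \<open>Rerouting along a lifted shortest path\<close>

locale lifted_shortest_path = tree_coforest_map D rv sc Bd w T F es \<alpha>
  for D :: "'d set" and rv sc :: "'d \<Rightarrow> 'd" and Bd :: "'d set set" and w :: "'d \<Rightarrow> real"
    and T F :: "'d set set" and es :: "'d set list" and \<alpha> :: "nat \<Rightarrow> 'd list" +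
  fixes s t :: "'d set" and \<sigma> :: "'d list"
  assumes shortest: "gshortest (Verts D sc) D (vert sc) rv w s \<sigma> t"
begin

abbreviation "lift\<sigma> \<equiv> lift rv es \<alpha> {} \<sigma>"
abbreviation "lift\<sigma>_verts \<equiv> gverts cvx' crev' (s, {}) lift\<sigma>"

lemma gwalk_\<sigma>: "gwalk (Verts D sc) D (vert sc) rv s \<sigma> t"
  and distinct_\<sigma>: "distinct (gverts (vert sc) rv s \<sigma>)"
  using shortest by (auto simp: gshortest_def gpath_def)

lemma length_lift\<sigma> [simp]: "length lift\<sigma> = length \<sigma>"
  by (metis length_map map_fst_lift)

lemma gwalk_lift\<sigma>: "gwalk CV CX cvx' crev' (s, {}) lift\<sigma> (t, wsig rv es \<alpha> \<sigma>)"
  using gwalk_lift[of s \<sigma> t "{}"] gwalk_\<sigma> by (simp add: pwalk_def)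

lemma nth_lift\<sigma>_verts:
  "j \<le> length \<sigma> \<Longrightarrow> lift\<sigma>_verts ! j = (gverts (vert sc) rv s \<sigma> ! j, wsig rv es \<alpha> (take j \<sigma>))"
  using nth_gverts_lift by simp

text \<open>Since \<open>\<sigma>\<close> is a path, its lift meets each fibre at most once.\<close>

lemma lift\<sigma>_verts_same_fibre:
  assumes "(y, h1) \<in> set lift\<sigma>_verts" "(y, h2) \<in> set lift\<sigma>_verts"
  shows "h1 = h2"
proof -
  have "inj_on fst (set lift\<sigma>_verts)"
    using distinct_\<sigma> map_fst_gverts_lift[of s "{}" \<sigma>] by (metis distinct_map)
  then show ?thesis using assms by (metis fst_conv inj_onD prod.inject)
qed

lemma lift\<sigma>_slice:
  assumes "i \<le> j" "j \<le> length \<sigma>"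
  shows "gwalk CV CX cvx' crev' (lift\<sigma>_verts ! i) (take (j - i) (drop i lift\<sigma>)) (lift\<sigma>_verts ! j)"
    and "gverts cvx' crev' (lift\<sigma>_verts ! i) (take (j - i) (drop i lift\<sigma>)) =
      take (Suc (j - i)) (drop i lift\<sigma>_verts)"
proof -
  have drop: "gverts cvx' crev' (lift\<sigma>_verts ! i) (drop i lift\<sigma>) = drop i lift\<sigma>_verts"
    using gverts_drop[of i lift\<sigma>] assms by simp
  have "gwalk CV CX cvx' crev' (lift\<sigma>_verts ! i) (drop i lift\<sigma>) (t, wsig rv es \<alpha> \<sigma>)"
    using gwalk_drop[OF wf_graph_cover gwalk_lift\<sigma>] assms by simp
  from gwalk_take[OF wf_graph_cover this, of "j - i"]
  show "gwalk CV CX cvx' crev' (lift\<sigma>_verts ! i) (take (j - i) (drop i lift\<sigma>)) (lift\<sigma>_verts ! j)"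
    using assms drop by simp
  show "gverts cvx' crev' (lift\<sigma>_verts ! i) (take (j - i) (drop i lift\<sigma>)) =
      take (Suc (j - i)) (drop i lift\<sigma>_verts)"
    using gverts_take[of "j - i" "drop i lift\<sigma>" cvx' crev' "lift\<sigma>_verts ! i"] assms drop
    by simp
qed

lemma len_lift\<sigma>_slice: "len (cw w) (take k (drop i lift\<sigma>)) = len w (take k (drop i \<sigma>))"
  by (simp add: len_cw take_map[symmetric] drop_map[symmetric])

lemma lift\<sigma>_split: "i \<le> j \<Longrightarrow> lift\<sigma> = take i lift\<sigma> @ take (j - i) (drop i lift\<sigma>) @ drop j lift\<sigma>"
  by (metis append_take_drop_id drop_drop le_add_diff_inverse2)

lemma lift\<sigma>_slice_le:
  assumes ij: "i \<le> j" "j \<le> length \<sigma>"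
    and r: "pwalk D rv sc (gverts (vert sc) rv s \<sigma> ! i) r (gverts (vert sc) rv s \<sigma> ! j) \<or>
      pwalk D rv sc (gverts (vert sc) rv s \<sigma> ! j) r (gverts (vert sc) rv s \<sigma> ! i)"
  shows "len (cw w) (take (j - i) (drop i lift\<sigma>)) \<le> len w r"
proof -
  have wf: "wf_graph (Verts D sc) D (vert sc) rv" using wf_graph_Verts by blast
  from r have "pwalk D rv sc (gverts (vert sc) rv s \<sigma> ! i) r (gverts (vert sc) rv s \<sigma> ! j) \<or>
      pwalk D rv sc (gverts (vert sc) rv s \<sigma> ! i) (rev (map rv r)) (gverts (vert sc) rv s \<sigma> ! j)"
    using gwalk_rev[OF wf rv_closed] by (auto simp: pwalk_def)
  moreover have "len w (rev (map rv r)) = len w r"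
    using len_rev_map[of r w rv] r pwalk_set w_rv by blast
  ultimately show ?thesis
    using gshortest_subpath_le[OF wf shortest ij] len_lift\<sigma>_slice unfolding pwalk_def by metis
qed

lemma lift\<sigma>_subpath:
  assumes i1: "i1 \<le> length \<sigma>" and i2: "i2 \<le> length \<sigma>"
  shows "\<exists>seg. gwalk CV CX cvx' crev' (lift\<sigma>_verts ! i1) seg (lift\<sigma>_verts ! i2) \<and>
     distinct (gverts cvx' crev' (lift\<sigma>_verts ! i1) seg) \<and>
     set (gverts cvx' crev' (lift\<sigma>_verts ! i1) seg) \<subseteq> set lift\<sigma>_verts \<and>
     (\<forall>r. pwalk D rv sc (gverts (vert sc) rv s \<sigma> ! i1) r (gverts (vert sc) rv s \<sigma> ! i2)
          \<longrightarrow> len (cw w) seg \<le> len w r) \<and>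
     (\<exists>ps ss. lift\<sigma> = ps @ seg @ ss \<or> rev (map crev' lift\<sigma>) = ps @ seg @ ss)"
proof -
  have distinct: "distinct lift\<sigma>_verts"
    using distinct_\<sigma> map_fst_gverts_lift[of s "{}" \<sigma>] by (metis distinct_map)
  show ?thesis
  proof (cases "i1 \<le> i2")
    case True
    define seg where "seg = take (i2 - i1) (drop i1 lift\<sigma>)"
    have "distinct (gverts cvx' crev' (lift\<sigma>_verts ! i1) seg)"
      and "set (gverts cvx' crev' (lift\<sigma>_verts ! i1) seg) \<subseteq> set lift\<sigma>_verts"
      using lift\<sigma>_slice(2)[OF True i2] distinct unfolding seg_def
      by (auto dest: in_set_takeD in_set_dropD)
    moreover have "lift\<sigma> = take i1 lift\<sigma> @ seg @ drop i2 lift\<sigma>"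
      using lift\<sigma>_split[OF True] by (simp add: seg_def)
    ultimately show ?thesis
      using lift\<sigma>_slice(1)[OF True i2] lift\<sigma>_slice_le[OF True i2] unfolding seg_def by blast
  next
    case False
    then have le: "i2 \<le> i1" by simp
    define sl where "sl = take (i1 - i2) (drop i2 lift\<sigma>)"
    have sl: "gwalk CV CX cvx' crev' (lift\<sigma>_verts ! i2) sl (lift\<sigma>_verts ! i1)"
      using lift\<sigma>_slice(1)[OF le i1] by (simp add: sl_def)
    have "gverts cvx' crev' (lift\<sigma>_verts ! i1) (rev (map crev' sl)) =
        rev (take (Suc (i1 - i2)) (drop i2 lift\<sigma>_verts))"
      using gverts_rev[OF wf_graph_cover rv_closed_cover sl] lift\<sigma>_slice(2)[OF le i1]
      by (simp add: sl_def)
    then have "distinct (gverts cvx' crev' (lift\<sigma>_verts ! i1) (rev (map crev' sl)))"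
      and "set (gverts cvx' crev' (lift\<sigma>_verts ! i1) (rev (map crev' sl))) \<subseteq> set lift\<sigma>_verts"
      using distinct by (auto dest: in_set_takeD in_set_dropD)
    moreover have "len (cw w) (rev (map crev' sl)) = len (cw w) sl"
      using gwalk_set[OF sl] w_rv by (intro len_rev_map) (auto simp: cw_def crev_def cdarts_def)
    moreover have "rev (map crev' lift\<sigma>) =
        rev (map crev' (drop i1 lift\<sigma>)) @ rev (map crev' sl) @ rev (map crev' (take i2 lift\<sigma>))"
      using arg_cong[OF lift\<sigma>_split[OF le], of "\<lambda>l. rev (map crev' l)"] by (simp add: sl_def)
    ultimately show ?thesis
      using gwalk_rev[OF wf_graph_cover rv_closed_cover sl] lift\<sigma>_slice_le[OF le i1]
      unfolding sl_def by (intro exI[of _ "rev (map crev' sl)"]) (auto simp: sl_def)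
  qed
qed

text \<open>Cut the path at its last vertex on the lift of \<open>\<sigma>\<close> and replace the part before it by
  a subpath of the lift of \<open>\<sigma>\<close>, which is no longer since \<open>\<sigma>\<close> is shortest.\<close>

lemma reroute_along_lift\<sigma>:
  assumes i: "i \<le> length \<sigma>" and P: "gpath CV CX cvx' crev' (lift\<sigma>_verts ! i) P b"
    and b: "b \<notin> set lift\<sigma>_verts"
  shows "\<exists>Q k. gwalk CV CX cvx' crev' (lift\<sigma>_verts ! i) Q b \<and>
    distinct (gverts cvx' crev' (lift\<sigma>_verts ! i) Q) \<and> len (cw w) Q \<le> len (cw w) P \<and>
    k \<le> length Q \<and>
    (\<exists>ps ss. lift\<sigma> = ps @ take k Q @ ss \<or> rev (map crev' lift\<sigma>) = ps @ take k Q @ ss) \<and>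
    (\<forall>j. k < j \<and> j \<le> length Q \<longrightarrow> gverts cvx' crev' (lift\<sigma>_verts ! i) Q ! j \<notin> set lift\<sigma>_verts)"
proof -
  let ?a = "lift\<sigma>_verts ! i"
  define GP where "GP = gverts cvx' crev' ?a P"
  have Pw: "gwalk CV CX cvx' crev' ?a P b" and Pd: "distinct GP"
    using P by (auto simp: gpath_def GP_def)
  have GP_last: "GP ! length P = b" using gverts_nth_length[OF wf_graph_cover Pw] by (simp add: GP_def)
  have "?a \<in> set lift\<sigma>_verts" using i by simp
  then obtain jp where jp: "jp < length P" "GP ! jp \<in> set lift\<sigma>_verts"
    and after: "\<forall>j. jp < j \<and> j \<le> length P \<longrightarrow> GP ! j \<notin> set lift\<sigma>_verts"
    using last_exit[of "\<lambda>j. GP ! j \<in> set lift\<sigma>_verts" "length P"] GP_last b by (auto simp: GP_def)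
  obtain ip where ip: "ip \<le> length \<sigma>" "lift\<sigma>_verts ! ip = GP ! jp"
    using jp(2) by (metis in_set_conv_nth length_gverts length_lift\<sigma> less_Suc_eq_le)
  obtain seg where seg: "gwalk CV CX cvx' crev' ?a seg (GP ! jp)"
    "distinct (gverts cvx' crev' ?a seg)" "set (gverts cvx' crev' ?a seg) \<subseteq> set lift\<sigma>_verts"
    "\<forall>r. pwalk D rv sc (gverts (vert sc) rv s \<sigma> ! i) r (gverts (vert sc) rv s \<sigma> ! ip)
       \<longrightarrow> len (cw w) seg \<le> len w r"
    "\<exists>ps ss. lift\<sigma> = ps @ seg @ ss \<or> rev (map crev' lift\<sigma>) = ps @ seg @ ss"
    using lift\<sigma>_subpath[OF i ip(1)] ip(2) by auto
  have "gwalk CV CX cvx' crev' (GP ! jp) (drop jp P) b"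
    using gwalk_drop[OF wf_graph_cover Pw, of jp] jp(1) by (simp add: GP_def)
  moreover have "gverts cvx' crev' (GP ! jp) (drop jp P) = drop jp GP"
    using gverts_drop[of jp P cvx' crev' ?a] jp(1) by (simp add: GP_def)
  moreover have "x \<notin> set lift\<sigma>_verts" if "x \<in> set (drop (Suc jp) GP)" for x
    using that after by (auto simp: in_set_conv_nth GP_def)
  then have "set (tl (drop jp GP)) \<inter> set lift\<sigma>_verts = {}"
    by (auto simp: drop_Suc tl_drop)
  ultimately have Q: "gwalk CV CX cvx' crev' ?a (seg @ drop jp P) b"
    "distinct (gverts cvx' crev' ?a (seg @ drop jp P))"
    "\<forall>j. length seg < j \<and> j \<le> length (seg @ drop jp P) \<longrightarrow>
      gverts cvx' crev' ?a (seg @ drop jp P) ! j \<notin> set lift\<sigma>_verts"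
    using gwalk_splice[OF wf_graph_cover seg(1-3)] Pd by (auto simp: GP_def)
  have "gwalk CV CX cvx' crev' ?a (take jp P) (lift\<sigma>_verts ! ip)"
    using gwalk_take[OF wf_graph_cover Pw, of jp] jp(1) ip(2) by (simp add: GP_def)
  moreover have "?a = (gverts (vert sc) rv s \<sigma> ! i, wsig rv es \<alpha> (take i \<sigma>))"
    and "fst (lift\<sigma>_verts ! ip) = gverts (vert sc) rv s \<sigma> ! ip"
    using nth_lift\<sigma>_verts i ip(1) by auto
  ultimately have "len (cw w) seg \<le> len (cw w) (take jp P)"
    using seg(4) gwalk_cover_proj(1) by (metis len_cw)
  then have "len (cw w) (seg @ drop jp P) \<le> len (cw w) P"
    using len_append[of "cw w" "take jp P" "drop jp P"] by (simp add: len_append)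
  then show ?thesis
    using Q seg(5) by (intro exI[of _ "seg @ drop jp P"] exI[of _ "length seg"]) auto
qed

lemma reroute_closed_walk:
  assumes i: "i \<le> length \<sigma>"
  defines "v \<equiv> gverts (vert sc) rv s \<sigma> ! i" and "h \<equiv> wsig rv es \<alpha> (take i \<sigma>)"
  assumes c: "pwalk D rv sc v c v"
  shows "\<exists>\<gamma>' k. pwalk D rv sc v \<gamma>' v \<and> wsig rv es \<alpha> \<gamma>' = wsig rv es \<alpha> c \<and> len w \<gamma>' \<le> len w c \<and>
    distinct (gverts cvx' crev' (v, h) (lift rv es \<alpha> h \<gamma>')) \<and> k \<le> length \<gamma>' \<and>
    (\<exists>ps ss. lift\<sigma> = ps @ take k (lift rv es \<alpha> h \<gamma>') @ ss \<or>
      rev (map crev' lift\<sigma>) = ps @ take k (lift rv es \<alpha> h \<gamma>') @ ss) \<and>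
    (\<forall>j. k < j \<and> j \<le> length \<gamma>' \<longrightarrow>
      gverts cvx' crev' (v, h) (lift rv es \<alpha> h \<gamma>') ! j \<notin> set lift\<sigma>_verts)"
proof (cases "wsig rv es \<alpha> c = {}")
  case True
  have "v \<in> Verts D sc" using c by (simp add: pwalk_def gwalk_def)
  moreover have "0 \<le> len w c" using pwalk_set[OF c] w_nonneg by (intro len_nonneg) auto
  moreover have "\<exists>ps ss. lift\<sigma> = ps @ ss \<or> rev (map crev' lift\<sigma>) = ps @ ss" by blast
  ultimately show ?thesis using True
    by (intro exI[of _ "[]"] exI[of _ 0]) (simp add: pwalk_def)
next
  case False
  have a: "lift\<sigma>_verts ! i = (v, h)" using nth_lift\<sigma>_verts[OF i] by (simp add: v_def h_def)
  define b where "b = (v, sdiff h (wsig rv es \<alpha> c))"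
  have "(v, h) \<in> set lift\<sigma>_verts"
    using a i by (metis length_gverts length_lift\<sigma> le_imp_less_Suc nth_mem)
  then have "b \<notin> set lift\<sigma>_verts"
    using lift\<sigma>_verts_same_fibre[of v h] False unfolding b_def by (metis sdiff_eq_self_iff)
  have h_sub: "h \<subseteq> {..<length es}" using wsig_subset by (simp add: h_def)
  obtain P where P: "gshortest CV CX cvx' crev' (cw w) (v, h) P b"
    using gshortest_exists[OF finite_cverts finite_cdarts wf_graph_cover cw_nonneg gwalk_lift[OF c h_sub]]
    by (auto simp: b_def)
  then have "len (cw w) P \<le> len w c"
    using gwalk_lift[OF c h_sub] by (force simp: gshortest_def b_def)
  obtain Q k where Q: "gwalk CV CX cvx' crev' (v, h) Q b"
    "distinct (gverts cvx' crev' (v, h) Q)" "len (cw w) Q \<le> len (cw w) P" "k \<le> length Q"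
    "\<exists>ps ss. lift\<sigma> = ps @ take k Q @ ss \<or> rev (map crev' lift\<sigma>) = ps @ take k Q @ ss"
    "\<forall>j. k < j \<and> j \<le> length Q \<longrightarrow> gverts cvx' crev' (v, h) Q ! j \<notin> set lift\<sigma>_verts"
    using reroute_along_lift\<sigma>[OF i _ \<open>b \<notin> set lift\<sigma>_verts\<close>, of P] P
    unfolding a gshortest_def by blast
  have "pwalk D rv sc v (map fst Q) v" "wsig rv es \<alpha> (map fst Q) = wsig rv es \<alpha> c"
    "lift rv es \<alpha> h (map fst Q) = Q"
    using gwalk_cover_proj[OF Q(1)] by (auto simp: b_def sdiff_left_cancel)
  moreover have "len w (map fst Q) \<le> len w c"
    using Q(3) \<open>len (cw w) P \<le> len w c\<close> by (simp add: len_cw)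
  ultimately show ?thesis using Q by (intro exI[of _ "map fst Q"] exI[of _ k]) auto
qed

end

theorem lemma5p4:
  fixes D :: "'d set" and rv sc :: "'d \<Rightarrow> 'd" and Bd :: "'d set set" and w :: "'d \<Rightarrow> real"
    and T F :: "'d set set" and es :: "'d set list" and \<alpha> :: "nat \<Rightarrow> 'd list"
    and x :: "'d set" and \<gamma> :: "'d list" and s t :: "'d set" and \<sigma> :: "'d list"
  assumes surf: "surface_graph D rv sc Bd w"
    and dec: "tree_coforest D rv sc Bd T F es \<alpha>"
    and gmin: "z2_minimal D rv sc Bd w x \<gamma>"
    and sp: "gshortest (Verts D sc) D (vert sc) rv w s \<sigma> t"
    and meet: "set (gverts (vert sc) rv s \<sigma>) \<inter> set (gverts (vert sc) rv x \<gamma>) \<noteq> {}"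
  shows "\<exists>u \<gamma>' h k.
     z2_minimal D rv sc Bd w u \<gamma>' \<and> homologous D rv sc Bd \<gamma>' \<gamma> \<and>
     h \<subseteq> {..<length es} \<and>
     cshortest D rv sc es \<alpha> w (u, h) (lift rv es \<alpha> h \<gamma>') (u, sdiff h (wsig rv es \<alpha> \<gamma>')) \<and>
     k \<le> length \<gamma>' \<and>
     (\<exists>ps ss. lift rv es \<alpha> {} \<sigma> = ps @ take k (lift rv es \<alpha> h \<gamma>') @ ss \<or>
              rev (map (crev rv es \<alpha>) (lift rv es \<alpha> {} \<sigma>)) = ps @ take k (lift rv es \<alpha> h \<gamma>') @ ss) \<and>
     (u, h) \<in> set (gverts (cvx sc) (crev rv es \<alpha>) (s, {}) (lift rv es \<alpha> {} \<sigma>)) \<and>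
     (\<forall>j. k < j \<and> j \<le> length \<gamma>' \<longrightarrow>
        gverts (cvx sc) (crev rv es \<alpha>) (u, h) (lift rv es \<alpha> h \<gamma>') ! j
          \<notin> set (gverts (cvx sc) (crev rv es \<alpha>) (s, {}) (lift rv es \<alpha> {} \<sigma>)))"
proof -
  interpret lifted_shortest_path D rv sc Bd w T F es \<alpha> s t \<sigma>
    using surf dec sp by unfold_locales
  obtain v where "v \<in> set (gverts (vert sc) rv s \<sigma>)" "v \<in> set (gverts (vert sc) rv x \<gamma>)"
    using meet by blast
  then obtain i j where i: "i \<le> length \<sigma>" "gverts (vert sc) rv s \<sigma> ! i = v"
    and j: "j \<le> length \<gamma>" "gverts (vert sc) rv x \<gamma> ! j = v"
    by (metis in_set_conv_nth length_gverts less_Suc_eq_le)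
  define h where "h = wsig rv es \<alpha> (take i \<sigma>)"
  have \<gamma>: "gwalk (Verts D sc) D (vert sc) rv x \<gamma> x" using gmin by (simp add: z2_minimal_def pwalk_def)
  then have "pwalk D rv sc v (drop j \<gamma> @ take j \<gamma>) v"
    using gwalk_rotate[OF wf_graph_Verts[OF order_refl] \<gamma> j(1)] j(2) by (simp add: pwalk_def)
  from reroute_closed_walk[OF i(1) this[folded i(2)]] obtain \<gamma>' k where \<gamma>':
    "pwalk D rv sc v \<gamma>' v" "wsig rv es \<alpha> \<gamma>' = wsig rv es \<alpha> \<gamma>" "len w \<gamma>' \<le> len w \<gamma>"
    "distinct (gverts cvx' crev' (v, h) (lift rv es \<alpha> h \<gamma>'))" "k \<le> length \<gamma>'"
    "\<exists>ps ss. lift\<sigma> = ps @ take k (lift rv es \<alpha> h \<gamma>') @ ss \<or>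
      rev (map crev' lift\<sigma>) = ps @ take k (lift rv es \<alpha> h \<gamma>') @ ss"
    "\<forall>j. k < j \<and> j \<le> length \<gamma>' \<longrightarrow>
      gverts cvx' crev' (v, h) (lift rv es \<alpha> h \<gamma>') ! j \<notin> set lift\<sigma>_verts"
    unfolding i(2) h_def[symmetric] wsig_rotate len_rotate by blast
  have min: "z2_minimal D rv sc Bd w v \<gamma>'" using z2_minimal_if_wsig_eq[OF gmin \<gamma>'(1-3)] .
  moreover have "homologous D rv sc Bd \<gamma>' \<gamma>"
    using wsig_eq_imp_homologous[OF \<gamma>'(1) _ \<gamma>'(2)] gmin unfolding z2_minimal_def by blast
  moreover have "h \<subseteq> {..<length es}" using wsig_subset by (simp add: h_def)
  moreover have "(v, h) \<in> set lift\<sigma>_verts"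
    using nth_lift\<sigma>_verts[OF i(1)] i by (metis h_def length_gverts length_lift\<sigma> le_imp_less_Suc nth_mem)
  ultimately show ?thesis
    using cshortest_lift_if_z2_minimal[OF min _ \<gamma>'(4)] \<gamma>'(5-7) by blast
qed

end
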